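(* Let $n\ge1$, $s\in(0,1)$ with $n/s\ge2$, $\Omega\subset\mathbb R^n$ a bounded Lipschitz domain, $\mu\in(0,n)$, $M$ satisfying (M1)–(M3) and $g$ satisfying (g1)–(g4). Then every Palais–Smale sequence of the functional $$J(u)=\frac sn\hat M(\|u\|^{n/s})-\frac12\int_\Omega\left(\int_\Omega\frac{G(y,u)}{|x-y|^\mu}dy\right)G(x,u)\,dx$$ is bounded in $X_0$; i.e. if $\{u_k\}\subset X_0$, $J(u_k)\to c$ for some $c\in\mathbb R$ and $J'(u_k)\to0$ in $X_0^*$, then $\sup_k\|u_k\|<\infty$.
   Context: $X_0=\{u\in W^{s,n/s}(\mathbb R^n): u=0 \text{ in } \mathbb R^n\setminus\Omega\}$ with norm $\|u\|=\left(\int_{\mathbb R^n}\int_{\mathbb R^n}\frac{|u(x)-u(y)|^{n/s}}{|x-y|^{2n}}dxdy\right)^{s/n}$. $M:\mathbb R^+\to\mathbb R^+$ continuous, $\hat M(t)=\int_0^tM$; $g(x,t)=h(x,t)\exp(|t|^{\frac n{n-s}})$ continuous, $G(x,t)=\int_0^tg(x,\tau)d\tau$. (M1) $\hat M(t+s)\ge\hat M(t)+\hat M(s)$ for $t,s\ge0$. (M2) There is $\gamma>1$ with $t\mapsto M(t)/t^{\gamma-1}$ nonincreasing for $t>0$. (M3) For each $b>0$ there is $\kappa(b)>0$ with $M(t)\ge\kappa$ for $t\ge b$. (g1) $h\in C^1(\overline\Omega\times\mathbb R)$, $h=0$ for $t\le0$, $h>0$ for $t>0$. (g2) For every $\varepsilon>0$,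 $\lim_{t\to\infty}\sup_{x}h(x,t)e^{-\varepsilon|t|^{\frac n{n-s}}}=0$ and $\lim_{t\to\infty}\inf_xh(x,t)e^{\varepsilon|t|^{\frac n{n-s}}}=\infty$. (g3) There are positive constants $t_0,T_0,\gamma_0$ with $0<t^{\gamma_0}G(x,t)\le T_0g(x,t)$ for $(x,t)\in\Omega\times[t_0,\infty)$. (g4) There is $l>\frac{\gamma n}{2s}-1$ such that $t\mapsto g(x,t)/t^l$ is increasing on $(0,\infty)$ uniformly in $x$. *)

theory Defs
  imports "HOL-Analysis.Analysis"
begin

definition lipschitz_domain :: "('a::euclidean_space) set \<Rightarrow> bool" where
  "lipschitz_domain \<Omega> \<longleftrightarrow> open \<Omega> \<and> connected \<Omega> \<and> \<Omega> \<noteq> {} \<and>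
     (\<forall>p\<in>frontier \<Omega>. \<exists>r>0. \<exists>e::'a. norm e = 1 \<and>
        (\<exists>(\<phi>::'a \<Rightarrow> real) (Lc::real).
           (\<forall>y z. y \<bullet> e = 0 \<longrightarrow> z \<bullet> e = 0 \<longrightarrow> \<bar>\<phi> y - \<phi> z\<bar> \<le> Lc * norm (y - z)) \<and>
           \<Omega> \<inter> ball p r = {x \<in> ball p r. x \<bullet> e < \<phi> (x - (x \<bullet> e) *\<^sub>R e)}))"

definition gagliardo :: "real \<Rightarrow> real \<Rightarrow> ('a::euclidean_space \<Rightarrow> real) \<Rightarrow> ennreal" where
  "gagliardo p s u =
     (\<integral>\<^sup>+x. \<integral>\<^sup>+y. ennreal (\<bar>u x - u y\<bar> powr p / norm (x - y) powr (real DIM('a) + s * p))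
        \<partial>lebesgue \<partial>lebesgue)"

definition frac_sobolev :: "real \<Rightarrow> real \<Rightarrow> ('a::euclidean_space \<Rightarrow> real) set" where
  "frac_sobolev s p = {u. u \<in> borel_measurable lebesgue \<and>
      (\<integral>\<^sup>+x. ennreal (\<bar>u x\<bar> powr p) \<partial>lebesgue) < \<infinity> \<and> gagliardo p s u < \<infinity>}"

definition X0 :: "real \<Rightarrow> 'a::euclidean_space set \<Rightarrow> ('a \<Rightarrow> real) set" where
  "X0 s \<Omega> = {u \<in> frac_sobolev s (real DIM('a) / s). \<forall>x. x \<notin> \<Omega> \<longrightarrow> u x = 0}"

definition X0_norm :: "real \<Rightarrow> ('a::euclidean_space \<Rightarrow> real) \<Rightarrow> real" where
  "X0_norm s u = enn2real (gagliardo (real DIM('a) / s) s u) powr (s / real DIM('a))"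

definition Mhat :: "(real \<Rightarrow> real) \<Rightarrow> real \<Rightarrow> real" where
  "Mhat M t = integral {0..t} M"

definition has_X0_derivative ::
  "real \<Rightarrow> 'a::euclidean_space set \<Rightarrow> (('a \<Rightarrow> real) \<Rightarrow> real) \<Rightarrow> (('a \<Rightarrow> real) \<Rightarrow> real)
     \<Rightarrow> ('a \<Rightarrow> real) \<Rightarrow> bool" where
  "has_X0_derivative s \<Omega> J L u \<longleftrightarrow>
     (\<forall>v\<in>X0 s \<Omega>. \<forall>w\<in>X0 s \<Omega>. \<forall>a b. L (\<lambda>x. a * v x + b * w x) = a * L v + b * L w) \<and>
     (\<exists>C. \<forall>v\<in>X0 s \<Omega>. \<bar>L v\<bar> \<le> C * X0_norm s v) \<and>
     (\<forall>\<epsilon>>0. \<exists>\<delta>>0. \<forall>v\<in>X0 s \<Omega>. X0_norm s v < \<delta> \<longrightarrow>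
        \<bar>J (\<lambda>x. u x + v x) - J u - L v\<bar> \<le> \<epsilon> * X0_norm s v)"

definition X0_dual_norm :: "real \<Rightarrow> 'a::euclidean_space set \<Rightarrow> (('a \<Rightarrow> real) \<Rightarrow> real) \<Rightarrow> real" where
  "X0_dual_norm s \<Omega> L = (SUP v\<in>{v \<in> X0 s \<Omega>. X0_norm s v \<le> 1}. \<bar>L v\<bar>)"

definition J_fun :: "real \<Rightarrow> real \<Rightarrow> (real \<Rightarrow> real) \<Rightarrow> ('a::euclidean_space \<Rightarrow> real \<Rightarrow> real)
     \<Rightarrow> 'a set \<Rightarrow> ('a \<Rightarrow> real) \<Rightarrow> real" where
  "J_fun s \<mu> M G \<Omega> u =
     s / real DIM('a) * Mhat M (X0_norm s u powr (real DIM('a) / s))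
     - 1/2 * (LINT x:\<Omega>|lebesgue. (LINT y:\<Omega>|lebesgue. G y (u y) / norm (x - y) powr \<mu>) * G x (u x))"

end

theory Submission
  imports Defs
begin

text \<open>Write N = \<parallel>u\<parallel>^p with p = n/s, and \<theta> = 1/(2(l+1)). At every point u where J is
  differentiable, J(u) - \<theta> J'(u)u \<ge> (s/(n\<gamma>) - \<theta>) M(N) N. Indeed, (M2) gives M(N) N/\<gamma> \<le> Mhat(N),
  and (g4) gives G(x, a\<tau>) \<le> a^(l+1) G(x, \<tau>) for 0 < a \<le> 1, so the Choquard term B satisfies
  B(au) \<le> a^(2l+2) B(u); comparing J(au) with the minorant (s/n) Mhat(a^p N) - a^(2l+2) B(u)/2 as
  a tends to 1 from below yields J'(u)u \<le> M(N) N - (l+1) B(u) without differentiating B.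
  That B(u) is finite needs an argument of its own: the truncations min u m are bounded, so their
  Choquard terms are finite; they converge to u in X0, so continuity of J at u bounds these terms
  uniformly, and monotone convergence passes the bound to B(u).
  By (M3) the left-hand side of the estimate is at least c\<parallel>u\<parallel>^2 once \<parallel>u\<parallel> \<ge> 1, whereas along a
  Palais-Smale sequence the right-hand side is O(1 + \<parallel>u\<parallel>).\<close>

lemma sigma_finite_lebesgue: "sigma_finite_measure (lebesgue :: 'a::euclidean_space measure)"
proof -
  interpret lborel: sigma_finite_measure "lborel :: 'a measure" by (rule sigma_finite_lborel)
  from lborel.sigma_finite_countable obtain A :: "'a set set" where
    "countable A" "A \<subseteq> sets lborel" "\<Union>A = space lborel" "\<forall>a\<in>A. emeasure lborel a \<noteq> \<infinity>"
    by blast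
  then show ?thesis
    by unfold_locales (auto intro!: exI[of _ A])
qed

lemma measurable_ident_lebesgue_borel [measurable]:
  "(\<lambda>x. x) \<in> (lebesgue :: 'a::euclidean_space measure) \<rightarrow>\<^sub>M borel"
  by (rule measurable_completion) simp

lemma sets_lebesgue_cball [measurable]: "cball x r \<in> sets (lebesgue :: 'a::euclidean_space measure)"
  by (intro sets_completionI_sets) (simp add: borel_closed)

lemma sets_lebesgue_ball [measurable]: "ball x r \<in> sets (lebesgue :: 'a::euclidean_space measure)"
  by (intro sets_completionI_sets) (simp add: borel_open)

subsection \<open>Local integrability of the Riesz kernel\<close>

lemma dyadic_scale_exists:
  fixes d R :: real
  assumes "0 < d" "d < R"
  obtains k :: nat where "R / 2 ^ Suc k < d" "d \<le> R / 2 ^ k"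
proof -
  obtain j where "(1/2::real) ^ j < d / R"
    using real_arch_pow_inv[of "d / R" "1/2"] assms by auto
  then have "\<not> d \<le> R / 2 ^ j"
    using assms by (simp add: power_one_over field_simps)
  then obtain k where "d \<le> R / 2 ^ k" "\<not> d \<le> R / 2 ^ Suc k"
    using ex_least_nat_less[of "\<lambda>k. \<not> d \<le> R / 2 ^ k"] assms by auto
  then show ?thesis
    using that[of k] by linarith
qed

lemma riesz_kernel_le_dyadic_sum:
  fixes x y :: "'a::real_normed_vector"
  assumes "0 < R" "0 < \<mu>"
  shows "indicator (ball x R) y * ennreal (norm (x - y) powr (-\<mu>))
    \<le> (\<Sum>k. ennreal ((R / 2 ^ Suc k) powr (-\<mu>)) * indicator (cball x (R / 2 ^ k)) y)"
proof (cases "y \<in> ball x R \<and> y \<noteq> x")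
  case True
  then have "0 < norm (x - y)" "norm (x - y) < R"
    by (auto simp: dist_norm)
  then obtain k where k: "R / 2 ^ Suc k < norm (x - y)" "norm (x - y) \<le> R / 2 ^ k"
    by (rule dyadic_scale_exists)
  then have "norm (x - y) powr (-\<mu>) \<le> (R / 2 ^ Suc k) powr (-\<mu>)"
    using assms by (intro powr_mono2') auto
  then have "indicator (ball x R) y * ennreal (norm (x - y) powr (-\<mu>))
      \<le> ennreal ((R / 2 ^ Suc k) powr (-\<mu>)) * indicator (cball x (R / 2 ^ k)) y"
    using True k by (auto simp: dist_norm indicator_def intro!: ennreal_leI)
  also have "\<dots> \<le> (\<Sum>k. ennreal ((R / 2 ^ Suc k) powr (-\<mu>)) * indicator (cball x (R / 2 ^ k)) y)"
    by (rule sum_le_suminf[of _ "{k}", simplified]) auto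
  finally show ?thesis .
qed (auto simp: indicator_def)

lemma dyadic_shell_weight:
  fixes R \<mu> :: real and k n :: nat
  assumes "0 \<le> R"
  shows "(R / 2 ^ Suc k) powr (-\<mu>) * (R / 2 ^ k) ^ n = R ^ n * (R / 2) powr (-\<mu>) * (2 powr (\<mu> - real n)) ^ k"
proof -
  have pow2: "((2::real) ^ k) powr \<mu> = (2 powr \<mu>) ^ k"
    unfolding powr_realpow[of 2 k, symmetric, simplified] by (simp add: powr_powr powr_power mult.commute)
  have "(R / 2 ^ Suc k) powr (-\<mu>) = ((R / 2) / 2 ^ k) powr (-\<mu>)"
    by simp
  also have "\<dots> = (R / 2) powr (-\<mu>) * (2 powr \<mu>) ^ k"
    using assms unfolding powr_divide powr_minus pow2
    by (simp only: divide_inverse inverse_inverse_eq inverse_mult_distrib mult.assoc)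
  finally have "(R / 2 ^ Suc k) powr (-\<mu>) = (R / 2) powr (-\<mu>) * (2 powr \<mu>) ^ k" .
  moreover have "(R / 2 ^ k) ^ n = R ^ n / (2 ^ n) ^ k"
    by (simp add: power_divide power_mult[symmetric] mult.commute)
  moreover have "(2 powr \<mu>) ^ k / (2 ^ n) ^ k = (2 powr (\<mu> - real n)) ^ k"
    by (simp add: power_divide[symmetric] powr_diff powr_realpow)
  moreover have "((2::real) ^ n) ^ k = (2 ^ k) ^ n"
    by (simp add: power_mult[symmetric] mult.commute)
  ultimately show ?thesis
    by (simp add: field_simps)
qed

lemma riesz_kernel_ball_integral_bounded:
  fixes R \<mu> :: real
  assumes R: "0 < R" and \<mu>: "0 < \<mu>" "\<mu> < real DIM('a)"
  shows "\<exists>K. \<forall>x::'a::euclidean_space.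
     (\<integral>\<^sup>+ y. indicator (ball x R) y * ennreal (norm (x - y) powr (-\<mu>)) \<partial>lebesgue) \<le> ennreal K"
proof -
  define n where "n = DIM('a)"
  define V where "V = unit_ball_vol (real n)"
  define C where "C = V * R ^ n * (R / 2) powr (-\<mu>)"
  define r where "r = 2 powr (\<mu> - real n)"
  \<comment> \<open>The dyadic shells contribute a geometric series of ratio r, and r < 1 because \<mu> < n.\<close>
  have r: "0 < r" "r < 1"
    using \<mu> powr_less_mono[of "\<mu> - real n" 0 2] unfolding r_def n_def by auto
  have V: "0 \<le> V"
    unfolding V_def by simp
  have C: "0 \<le> C"
    unfolding C_def using R V by simp
  have shell: "(R / 2 ^ Suc k) powr (-\<mu>) * (V * (R / 2 ^ k) ^ n) = C * r ^ k" for k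
    using dyadic_shell_weight[where R=R and \<mu>=\<mu> and k=k and n=n] R unfolding C_def r_def by (simp add: mult_ac)
  show ?thesis
  proof (intro exI allI)
    fix x :: 'a
    have "(\<integral>\<^sup>+ y. indicator (ball x R) y * ennreal (norm (x - y) powr (-\<mu>)) \<partial>lebesgue)
        \<le> (\<integral>\<^sup>+ y. (\<Sum>k. ennreal ((R / 2 ^ Suc k) powr (-\<mu>)) * indicator (cball x (R / 2 ^ k)) y) \<partial>lebesgue)"
      using R \<mu> by (intro nn_integral_mono riesz_kernel_le_dyadic_sum)
    also have "\<dots> = (\<Sum>k. \<integral>\<^sup>+ y. ennreal ((R / 2 ^ Suc k) powr (-\<mu>)) * indicator (cball x (R / 2 ^ k)) y \<partial>lebesgue)"
      by (rule nn_integral_suminf) measurable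
    also have "\<dots> = (\<Sum>k. ennreal (C * r ^ k))"
    proof (rule suminf_cong)
      fix k
      have "(\<integral>\<^sup>+ y. ennreal ((R / 2 ^ Suc k) powr (-\<mu>)) * indicator (cball x (R / 2 ^ k)) y \<partial>lebesgue)
          = ennreal ((R / 2 ^ Suc k) powr (-\<mu>)) * emeasure lebesgue (cball x (R / 2 ^ k))"
        by (rule nn_integral_cmult_indicator) measurable
      also have "emeasure lebesgue (cball x (R / 2 ^ k)) = ennreal (V * (R / 2 ^ k) ^ n)"
        using R by (simp add: emeasure_cball V_def n_def)
      also have "ennreal ((R / 2 ^ Suc k) powr (-\<mu>)) * \<dots> = ennreal (C * r ^ k)"
        unfolding shell[symmetric] using R V by (intro ennreal_mult[symmetric]) auto
      finally show "(\<integral>\<^sup>+ y. ennreal ((R / 2 ^ Suc k) powr (-\<mu>)) * indicator (cball x (R / 2 ^ k)) y \<partial>lebesgue)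
          = ennreal (C * r ^ k)" .
    qed
    also have "\<dots> = ennreal (\<Sum>k. C * r ^ k)"
      using C r summable_mult[OF summable_geometric, of r C] by (intro suminf_ennreal2) auto
    finally show "(\<integral>\<^sup>+ y. indicator (ball x R) y * ennreal (norm (x - y) powr (-\<mu>)) \<partial>lebesgue)
        \<le> ennreal (\<Sum>k. C * r ^ k)" .
  qed
qed

subsection \<open>The Gagliardo seminorm and the space X0\<close>

lemma borel_measurable_gagliardo_integrand [measurable]:
  fixes u :: "'a::euclidean_space \<Rightarrow> real"
  assumes [measurable]: "u \<in> borel_measurable lebesgue"
  shows "(\<lambda>z. ennreal (\<bar>u (fst z) - u (snd z)\<bar> powr p / norm (fst z - snd z) powr c))
    \<in> borel_measurable (lebesgue \<Otimes>\<^sub>M lebesgue)"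
  by measurable

lemma gagliardo_eq_nn_integral_pair:
  fixes u :: "'a::euclidean_space \<Rightarrow> real"
  assumes "u \<in> borel_measurable lebesgue"
  shows "gagliardo p s u = (\<integral>\<^sup>+ z. ennreal (\<bar>u (fst z) - u (snd z)\<bar> powr p
      / norm (fst z - snd z) powr (real DIM('a) + s * p)) \<partial>(lebesgue \<Otimes>\<^sub>M lebesgue))"
  unfolding gagliardo_def
  using sigma_finite_measure.nn_integral_fst[OF sigma_finite_lebesgue
      borel_measurable_gagliardo_integrand[OF assms]]
  by simp

lemma gagliardo_mono:
  assumes "0 \<le> p" and "\<And>x y. \<bar>v x - v y\<bar> \<le> \<bar>u x - u y\<bar>"
  shows "gagliardo p s v \<le> gagliardo p s u"
  unfolding gagliardo_def
  using assms by (intro nn_integral_mono ennreal_leI divide_right_mono powr_mono2) auto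

lemma gagliardo_cmult:
  fixes u :: "'a::euclidean_space \<Rightarrow> real"
  assumes u [measurable]: "u \<in> borel_measurable lebesgue" and p: "0 \<le> p"
  shows "gagliardo p s (\<lambda>x. c * u x) = ennreal (\<bar>c\<bar> powr p) * gagliardo p s u"
proof -
  have "ennreal (\<bar>c * a - c * b\<bar> powr p / d) = ennreal (\<bar>c\<bar> powr p) * ennreal (\<bar>a - b\<bar> powr p / d)"
    if "0 \<le> d" for a b d :: real
  proof -
    have "\<bar>c * a - c * b\<bar> powr p = \<bar>c\<bar> powr p * \<bar>a - b\<bar> powr p"
      unfolding right_diff_distrib[symmetric] abs_mult by (simp add: powr_mult)
    then show ?thesis
      using that by (simp add: ennreal_mult[symmetric])
  qed
  then have "gagliardo p s (\<lambda>x. c * u x) = (\<integral>\<^sup>+ z. ennreal (\<bar>c\<bar> powr p) * ennreal (\<bar>u (fst z) - u (snd z)\<bar> powr p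
      / norm (fst z - snd z) powr (real DIM('a) + s * p)) \<partial>(lebesgue \<Otimes>\<^sub>M lebesgue))"
    by (simp add: gagliardo_eq_nn_integral_pair)
  also have "\<dots> = ennreal (\<bar>c\<bar> powr p) * gagliardo p s u"
    by (simp add: gagliardo_eq_nn_integral_pair nn_integral_cmult)
  finally show ?thesis .
qed

lemma X0_borel_measurable: "u \<in> X0 s \<Omega> \<Longrightarrow> u \<in> borel_measurable lebesgue"
  by (simp add: X0_def frac_sobolev_def)

lemma X0_gagliardo_finite:
  fixes u :: "'a::euclidean_space \<Rightarrow> real"
  shows "u \<in> X0 s \<Omega> \<Longrightarrow> gagliardo (real DIM('a) / s) s u < \<infinity>"
  by (simp add: X0_def frac_sobolev_def)

lemma X0_dominated:
  fixes u v :: "'a::euclidean_space \<Rightarrow> real"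
  assumes u: "u \<in> X0 s \<Omega>" and s: "0 < s" and v: "v \<in> borel_measurable lebesgue"
    and le: "\<And>x. \<bar>v x\<bar> \<le> \<bar>u x\<bar>" and le_diff: "\<And>x y. \<bar>v x - v y\<bar> \<le> \<bar>u x - u y\<bar>"
  shows "v \<in> X0 s \<Omega>"
proof -
  have p: "0 \<le> real DIM('a) / s"
    using s by simp
  have "(\<integral>\<^sup>+ x. ennreal (\<bar>v x\<bar> powr (real DIM('a) / s)) \<partial>lebesgue)
      \<le> (\<integral>\<^sup>+ x. ennreal (\<bar>u x\<bar> powr (real DIM('a) / s)) \<partial>lebesgue)"
    by (intro nn_integral_mono ennreal_leI powr_mono2 p le) auto
  moreover have "gagliardo (real DIM('a) / s) s v \<le> gagliardo (real DIM('a) / s) s u"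
    by (rule gagliardo_mono[OF p le_diff])
  moreover have "v x = 0" if "x \<notin> \<Omega>" for x
    using le[of x] u that by (auto simp: X0_def)
  ultimately show ?thesis
    using u v unfolding X0_def frac_sobolev_def by auto
qed

lemma X0_cmult:
  fixes u :: "'a::euclidean_space \<Rightarrow> real"
  assumes u: "u \<in> X0 s \<Omega>" and s: "0 < s"
  shows "(\<lambda>x. c * u x) \<in> X0 s \<Omega>"
proof -
  have p: "0 \<le> real DIM('a) / s"
    using s by simp
  have [measurable]: "u \<in> borel_measurable lebesgue"
    using u by (rule X0_borel_measurable)
  have "(\<integral>\<^sup>+ x. ennreal (\<bar>c * u x\<bar> powr (real DIM('a) / s)) \<partial>lebesgue)
      = (\<integral>\<^sup>+ x. ennreal (\<bar>c\<bar> powr (real DIM('a) / s)) * ennreal (\<bar>u x\<bar> powr (real DIM('a) / s)) \<partial>lebesgue)"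
    by (intro nn_integral_cong) (simp add: abs_mult powr_mult ennreal_mult)
  also have "\<dots> = ennreal (\<bar>c\<bar> powr (real DIM('a) / s)) * (\<integral>\<^sup>+ x. ennreal (\<bar>u x\<bar> powr (real DIM('a) / s)) \<partial>lebesgue)"
    by (rule nn_integral_cmult) measurable
  finally have "(\<integral>\<^sup>+ x. ennreal (\<bar>c * u x\<bar> powr (real DIM('a) / s)) \<partial>lebesgue)
      = ennreal (\<bar>c\<bar> powr (real DIM('a) / s)) * (\<integral>\<^sup>+ x. ennreal (\<bar>u x\<bar> powr (real DIM('a) / s)) \<partial>lebesgue)" .
  moreover have "gagliardo (real DIM('a) / s) s (\<lambda>x. c * u x)
      = ennreal (\<bar>c\<bar> powr (real DIM('a) / s)) * gagliardo (real DIM('a) / s) s u"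
    by (rule gagliardo_cmult) (use p in auto)
  ultimately show ?thesis
    using u by (simp add: X0_def frac_sobolev_def ennreal_mult_less_top)
qed

lemma X0_norm_nonneg: "0 \<le> X0_norm s u"
  by (simp add: X0_norm_def)

lemma X0_norm_powr:
  fixes u :: "'a::euclidean_space \<Rightarrow> real"
  assumes "0 < s"
  shows "X0_norm s u powr (real DIM('a) / s) = enn2real (gagliardo (real DIM('a) / s) s u)"
  unfolding X0_norm_def using assms by (simp add: powr_powr)

lemma X0_norm_cmult:
  fixes u :: "'a::euclidean_space \<Rightarrow> real"
  assumes u: "u \<in> X0 s \<Omega>" and s: "0 < s"
  shows "X0_norm s (\<lambda>x. c * u x) = \<bar>c\<bar> * X0_norm s u"
proof -
  have "enn2real (gagliardo (real DIM('a) / s) s (\<lambda>x. c * u x))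
      = \<bar>c\<bar> powr (real DIM('a) / s) * enn2real (gagliardo (real DIM('a) / s) s u)"
    using gagliardo_cmult[OF X0_borel_measurable[OF u], of "real DIM('a) / s" s c] s
    by (simp add: enn2real_mult)
  then show ?thesis
    unfolding X0_norm_def using s by (simp add: powr_mult powr_powr)
qed

lemma abs_le_X0_dual_norm_mult:
  fixes L :: "('a::euclidean_space \<Rightarrow> real) \<Rightarrow> real"
  assumes d: "has_X0_derivative s \<Omega> J L u" and v: "v \<in> X0 s \<Omega>" and s: "0 < s"
  shows "\<bar>L v\<bar> \<le> X0_dual_norm s \<Omega> L * X0_norm s v"
proof -
  from d have linear: "\<And>v w a b. v \<in> X0 s \<Omega> \<Longrightarrow> w \<in> X0 s \<Omega> \<Longrightarrow> L (\<lambda>x. a * v x + b * w x) = a * L v + b * L w"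
    and "\<exists>C. \<forall>v\<in>X0 s \<Omega>. \<bar>L v\<bar> \<le> C * X0_norm s v"
    unfolding has_X0_derivative_def by blast+
  then obtain C where C: "\<And>v. v \<in> X0 s \<Omega> \<Longrightarrow> \<bar>L v\<bar> \<le> C * X0_norm s v"
    by blast
  define S where "S = {v \<in> X0 s \<Omega>. X0_norm s v \<le> 1}"
  have bdd: "bdd_above ((\<lambda>v. \<bar>L v\<bar>) ` S)"
  proof (rule bdd_aboveI2)
    fix w
    assume "w \<in> S"
    then have "\<bar>L w\<bar> \<le> C * X0_norm s w" "X0_norm s w \<le> 1"
      using C unfolding S_def by auto
    moreover have "C * X0_norm s w \<le> \<bar>C\<bar> * X0_norm s w"
      by (intro mult_right_mono X0_norm_nonneg) simp
    moreover have "\<bar>C\<bar> * X0_norm s w \<le> \<bar>C\<bar>"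
      using \<open>X0_norm s w \<le> 1\<close> by (simp add: mult_left_le)
    ultimately show "\<bar>L w\<bar> \<le> \<bar>C\<bar>"
      by linarith
  qed
  show ?thesis
  proof (cases "X0_norm s v = 0")
    case True
    then show ?thesis
      using C[OF v] by simp
  next
    case False
    define \<nu> where "\<nu> = X0_norm s v"
    have \<nu>: "0 < \<nu>"
      using False X0_norm_nonneg[of s v] unfolding \<nu>_def by simp
    define v' where "v' = (\<lambda>x. (1 / \<nu>) * v x)"
    have "v' \<in> X0 s \<Omega>"
      unfolding v'_def by (rule X0_cmult[OF v s])
    moreover have "X0_norm s v' = 1"
      unfolding v'_def X0_norm_cmult[OF v s] using \<nu> unfolding \<nu>_def by simp
    ultimately have "v' \<in> S"
      unfolding S_def by simp
    then have "\<bar>L v'\<bar> \<le> X0_dual_norm s \<Omega> L"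
      unfolding X0_dual_norm_def S_def[symmetric] by (rule cSUP_upper[OF _ bdd])
    moreover have "L v' = (1 / \<nu>) * L v"
      using linear[OF v v, of "1 / \<nu>" 0] unfolding v'_def by simp
    ultimately show ?thesis
      using \<nu> unfolding \<nu>_def by (simp add: abs_mult field_simps)
  qed
qed

lemma abs_truncation_diff_antimono:
  fixes a b m m' :: real
  assumes "m' \<le> m"
  shows "\<bar>(min a m - a) - (min b m - b)\<bar> \<le> \<bar>(min a m' - a) - (min b m' - b)\<bar>"
  using assms by (simp add: min_def abs_if)

lemma abs_truncation_diff_le:
  fixes a b m :: real
  shows "\<bar>(min a m - a) - (min b m - b)\<bar> \<le> \<bar>a - b\<bar>"
  by (simp add: min_def abs_if)

lemma gagliardo_truncation_tendsto_0:
  fixes u :: "'a::euclidean_space \<Rightarrow> real"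
  assumes u [measurable]: "u \<in> borel_measurable lebesgue" and finite: "gagliardo p s u < \<infinity>"
    and p: "0 \<le> p"
  shows "(\<lambda>m. gagliardo p s (\<lambda>x. min (u x) (real m) - u x)) \<longlonglongrightarrow> 0"
proof -
  define F where "F m z = ennreal (\<bar>(min (u (fst z)) (real m) - u (fst z)) - (min (u (snd z)) (real m) - u (snd z))\<bar>
      powr p / norm (fst z - snd z) powr (real DIM('a) + s * p))" for m :: nat and z :: "'a \<times> 'a"
  have gagliardo_F: "gagliardo p s (\<lambda>x. min (u x) (real m) - u x) = integral\<^sup>N (lebesgue \<Otimes>\<^sub>M lebesgue) (F m)"
    for m
    unfolding F_def by (rule gagliardo_eq_nn_integral_pair) measurable
  have F_antimono: "F m z \<le> F m' z" if "m' \<le> m" for m m' z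
    unfolding F_def using that p
    by (intro ennreal_leI divide_right_mono powr_mono2 abs_truncation_diff_antimono) auto
  have "integral\<^sup>N (lebesgue \<Otimes>\<^sub>M lebesgue) (F 0) \<le> gagliardo p s u"
    unfolding gagliardo_F[symmetric] using p abs_truncation_diff_le by (intro gagliardo_mono) auto
  then have "(\<integral>\<^sup>+ z. (INF m. F m z) \<partial>(lebesgue \<Otimes>\<^sub>M lebesgue))
      = (INF m. integral\<^sup>N (lebesgue \<Otimes>\<^sub>M lebesgue) (F m))"
    using finite unfolding F_def
    by (intro nn_integral_monotone_convergence_INF_decseq[where i=0] decseq_SucI le_funI
        F_antimono[unfolded F_def]) auto
  moreover have "(INF m. F m z) = 0" for z
  proof -
    define m where "m = nat \<lceil>max (u (fst z)) (u (snd z))\<rceil>"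
    have "min (u (fst z)) (real m) = u (fst z)" "min (u (snd z)) (real m) = u (snd z)"
      unfolding m_def by (auto simp: min_def) linarith+
    then have "F m z = 0"
      unfolding F_def by simp
    then show ?thesis
      by (metis INF_lower UNIV_I le_zero_eq)
  qed
  ultimately have "(INF m. integral\<^sup>N (lebesgue \<Otimes>\<^sub>M lebesgue) (F m)) = 0"
    by simp
  moreover have "decseq (\<lambda>m. integral\<^sup>N (lebesgue \<Otimes>\<^sub>M lebesgue) (F m))"
    by (intro decseq_SucI nn_integral_mono F_antimono) simp
  ultimately show ?thesis
    unfolding gagliardo_F using LIMSEQ_INF by fastforce
qed

lemma X0_truncation_remainder:
  fixes u :: "'a::euclidean_space \<Rightarrow> real"
  assumes u: "u \<in> X0 s \<Omega>" and s: "0 < s"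
  shows "(\<lambda>x. min (u x) (real m) - u x) \<in> X0 s \<Omega>"
proof (rule X0_dominated[OF u s])
  have [measurable]: "u \<in> borel_measurable lebesgue"
    using u by (rule X0_borel_measurable)
  show "(\<lambda>x. min (u x) (real m) - u x) \<in> borel_measurable lebesgue"
    by measurable
  show "\<bar>min (u x) (real m) - u x\<bar> \<le> \<bar>u x\<bar>" for x
    by (simp add: min_def abs_if)
qed (rule abs_truncation_diff_le)

lemma X0_norm_truncation_tendsto_0:
  fixes u :: "'a::euclidean_space \<Rightarrow> real"
  assumes u: "u \<in> X0 s \<Omega>" and s: "0 < s"
  shows "(\<lambda>m. X0_norm s (\<lambda>x. min (u x) (real m) - u x)) \<longlonglongrightarrow> 0"
proof -
  have "(\<lambda>m. gagliardo (real DIM('a) / s) s (\<lambda>x. min (u x) (real m) - u x)) \<longlonglongrightarrow> ennreal 0"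
    using gagliardo_truncation_tendsto_0[OF X0_borel_measurable[OF u] X0_gagliardo_finite[OF u]] s
    by simp
  then have "(\<lambda>m. enn2real (gagliardo (real DIM('a) / s) s (\<lambda>x. min (u x) (real m) - u x))) \<longlonglongrightarrow> 0"
    by (intro tendsto_enn2real) auto
  then show ?thesis
    unfolding X0_norm_def using s by (intro tendsto_zero_powrI[where b="s / real DIM('a)"]) auto
qed

subsection \<open>Consequences of differentiability in X0\<close>

lemma has_X0_derivative_truncation_ge:
  fixes J :: "('a::euclidean_space \<Rightarrow> real) \<Rightarrow> real"
  assumes d: "has_X0_derivative s \<Omega> J L u" and u: "u \<in> X0 s \<Omega>" and s: "0 < s"
  shows "\<exists>m0. \<forall>m\<ge>m0. J u - 1 \<le> J (\<lambda>x. min (u x) (real m))"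
proof -
  obtain C where C: "\<And>v. v \<in> X0 s \<Omega> \<Longrightarrow> \<bar>L v\<bar> \<le> C * X0_norm s v"
    using d unfolding has_X0_derivative_def by blast
  obtain \<delta> where \<delta>: "0 < \<delta>" and small: "\<And>v. v \<in> X0 s \<Omega> \<Longrightarrow> X0_norm s v < \<delta> \<Longrightarrow>
      \<bar>J (\<lambda>x. u x + v x) - J u - L v\<bar> \<le> 1 * X0_norm s v"
    using d unfolding has_X0_derivative_def by (meson zero_less_one)
  define C' where "C' = \<bar>C\<bar> + 1"
  have C': "0 < C'"
    unfolding C'_def by simp
  obtain m0 where m0: "\<And>m. m \<ge> m0 \<Longrightarrow> X0_norm s (\<lambda>x. min (u x) (real m) - u x) < min \<delta> (1 / C')"
    using order_tendstoD(2)[OF X0_norm_truncation_tendsto_0[OF u s], of "min \<delta> (1 / C')"] \<delta> C'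
    by (auto simp: eventually_sequentially)
  have "J u - 1 \<le> J (\<lambda>x. min (u x) (real m))" if "m \<ge> m0" for m
  proof -
    define v where "v = (\<lambda>x. min (u x) (real m) - u x)"
    have v: "v \<in> X0 s \<Omega>" "X0_norm s v < min \<delta> (1 / C')"
      unfolding v_def using X0_truncation_remainder[OF u s] m0[OF that] by auto
    then have "\<bar>J (\<lambda>x. min (u x) (real m)) - J u - L v\<bar> \<le> X0_norm s v"
      using small[of v] unfolding v_def by simp
    moreover have "\<bar>L v\<bar> \<le> \<bar>C\<bar> * X0_norm s v"
      using C[OF v(1)] mult_right_mono[OF abs_ge_self X0_norm_nonneg, of C s v] by linarith
    moreover have "C' * X0_norm s v < 1"
      using v(2) C' by (simp add: less_divide_eq mult.commute)
    ultimately show ?thesis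
      unfolding C'_def by (simp add: algebra_simps)
  qed
  then show ?thesis
    by blast
qed

lemma has_X0_derivative_ray_quotient_ge:
  fixes J :: "('a::euclidean_space \<Rightarrow> real) \<Rightarrow> real"
  assumes d: "has_X0_derivative s \<Omega> J L u" and u: "u \<in> X0 s \<Omega>" and s: "0 < s" and \<epsilon>: "0 < \<epsilon>"
  shows "eventually (\<lambda>a. L u - \<epsilon> * X0_norm s u \<le> (J (\<lambda>x. a * u x) - J u) / (a - 1)) (at_left 1)"
proof -
  define \<nu> where "\<nu> = X0_norm s u"
  have \<nu>: "0 \<le> \<nu>"
    unfolding \<nu>_def by (rule X0_norm_nonneg)
  have "L (\<lambda>x. c * u x + 0 * u x) = c * L u + 0 * L u" for c
    using d u unfolding has_X0_derivative_def by blast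
  then have L_cmult: "L (\<lambda>x. c * u x) = c * L u" for c
    by simp
  obtain \<delta> where \<delta>: "0 < \<delta>" and small: "\<And>v. v \<in> X0 s \<Omega> \<Longrightarrow> X0_norm s v < \<delta> \<Longrightarrow>
      \<bar>J (\<lambda>x. u x + v x) - J u - L v\<bar> \<le> \<epsilon> * X0_norm s v"
    using d \<epsilon> unfolding has_X0_derivative_def by meson
  have "eventually (\<lambda>a. a \<in> {max 0 (1 - \<delta> / (\<nu> + 1))<..<1}) (at_left 1)"
    using \<delta> \<nu> by (intro eventually_at_left_real) auto
  then show ?thesis
    unfolding \<nu>_def[symmetric]
  proof eventually_elim
    case (elim a)
    then have a: "0 < a" "a < 1" "1 - a < \<delta> / (\<nu> + 1)"
      by auto
    then have "(1 - a) * (\<nu> + 1) < \<delta>"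
      using \<nu> by (simp add: less_divide_eq)
    moreover have "(1 - a) * \<nu> \<le> (1 - a) * (\<nu> + 1)"
      using a by (intro mult_left_mono) auto
    moreover have "X0_norm s (\<lambda>x. (a - 1) * u x) = (1 - a) * \<nu>"
      unfolding X0_norm_cmult[OF u s] \<nu>_def using a by simp
    ultimately have "\<bar>J (\<lambda>x. u x + (a - 1) * u x) - J u - L (\<lambda>x. (a - 1) * u x)\<bar> \<le> \<epsilon> * ((1 - a) * \<nu>)"
      using small[OF X0_cmult[OF u s, of "a - 1"]] by simp
    moreover have "(\<lambda>x. u x + (a - 1) * u x) = (\<lambda>x. a * u x)"
      by (auto simp: algebra_simps)
    ultimately have "J (\<lambda>x. a * u x) - J u \<le> (L u - \<epsilon> * \<nu>) * (a - 1)"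
      using L_cmult[of "a - 1"] by (simp add: algebra_simps)
    then show ?case
      using a by (simp add: le_divide_eq)
  qed
qed

lemma has_X0_derivative_le_of_minorant:
  fixes J :: "('a::euclidean_space \<Rightarrow> real) \<Rightarrow> real"
  assumes d: "has_X0_derivative s \<Omega> J L u" and u: "u \<in> X0 s \<Omega>" and s: "0 < s"
    and minorant: "\<And>a. 0 < a \<Longrightarrow> a < 1 \<Longrightarrow> \<phi> a \<le> J (\<lambda>x. a * u x)"
    and at_1: "\<phi> 1 = J u" and deriv: "(\<phi> has_real_derivative D) (at 1)"
  shows "L u \<le> D"
proof -
  define \<nu> where "\<nu> = X0_norm s u"
  have \<nu>: "0 \<le> \<nu>"
    unfolding \<nu>_def by (rule X0_norm_nonneg)
  have quotient: "((\<lambda>a. (\<phi> a - \<phi> 1) / (a - 1)) \<longlongrightarrow> D) (at_left 1)"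
    using deriv unfolding has_field_derivative_iff by (rule tendsto_within_subset) simp
  have bound: "L u - \<epsilon> * \<nu> \<le> D" if \<epsilon>: "0 < \<epsilon>" for \<epsilon>
  proof -
    have "eventually (\<lambda>a::real. a \<in> {0<..<1}) (at_left 1)"
      by (rule eventually_at_left_real) simp
    with has_X0_derivative_ray_quotient_ge[OF d u s \<epsilon>]
    have "eventually (\<lambda>a. L u - \<epsilon> * \<nu> \<le> (\<phi> a - \<phi> 1) / (a - 1)) (at_left 1)"
    proof eventually_elim
      case (elim a)
      then have "(J (\<lambda>x. a * u x) - J u) / (a - 1) \<le> (\<phi> a - \<phi> 1) / (a - 1)"
        using minorant at_1 by (intro divide_right_mono_neg) auto
      with elim show ?case
        unfolding \<nu>_def by linarith
    qed
    then show ?thesis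
      using tendsto_lowerbound[OF quotient] by simp
  qed
  show ?thesis
  proof (rule field_le_epsilon)
    fix e :: real
    assume e: "0 < e"
    have "L u - e / (\<nu> + 1) * \<nu> \<le> D"
      using bound[of "e / (\<nu> + 1)"] e \<nu> by simp
    moreover have "e / (\<nu> + 1) * \<nu> \<le> e"
      using e \<nu> by (simp add: field_simps)
    ultimately show "L u \<le> D + e"
      by linarith
  qed
qed

subsection \<open>The Kirchhoff term\<close>

lemma Mhat_has_real_derivative:
  assumes M: "continuous_on {0..} M" and N: "0 < N"
  shows "(Mhat M has_real_derivative M N) (at N)"
proof -
  have "((\<lambda>x. integral {0..x} M) has_real_derivative M N) (at N within {0..N + 1})"
    using N by (intro integral_has_real_derivative continuous_on_subset[OF M]) auto
  moreover have "at N within {0..N + 1} = at N"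
    using N by (intro at_within_interior) auto
  ultimately show ?thesis
    unfolding Mhat_def[abs_def] by simp
qed

lemma Mhat_mono:
  assumes M: "continuous_on {0..} M" and M_nonneg: "\<And>t. 0 \<le> t \<Longrightarrow> 0 \<le> M t"
    and ab: "0 \<le> a" "a \<le> b"
  shows "Mhat M a \<le> Mhat M b"
proof -
  have integrable: "M integrable_on {0..b}"
    by (intro integrable_continuous_real continuous_on_subset[OF M]) auto
  have "integral {0..a} M + integral {a..b} M = integral {0..b} M"
    using Henstock_Kurzweil_Integration.integral_combine[OF _ _ integrable] ab by simp
  moreover have "0 \<le> integral {a..b} M"
    using M_nonneg ab integrable_on_subinterval[OF integrable, of a b]
    by (intro integral_nonneg) auto
  ultimately show ?thesis
    unfolding Mhat_def by simp
qed

lemma M_mult_le_Mhat: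
  assumes M: "continuous_on {0..} M" and M_nonneg: "\<And>t. 0 \<le> t \<Longrightarrow> 0 \<le> M t" and \<gamma>: "1 < \<gamma>"
    and M2: "\<And>t1 t2. 0 < t1 \<Longrightarrow> t1 \<le> t2 \<Longrightarrow> M t2 / t2 powr (\<gamma> - 1) \<le> M t1 / t1 powr (\<gamma> - 1)"
    and N: "0 < N"
  shows "M N * N / \<gamma> \<le> Mhat M N"
proof -
  define c where "c = M N / N powr (\<gamma> - 1)"
  have "((\<lambda>t. t powr (\<gamma> - 1)) has_integral (N powr \<gamma> / \<gamma> - 0 powr \<gamma> / \<gamma>)) {0..N}"
  proof (rule fundamental_theorem_of_calculus_interior)
    show "continuous_on {0..N} (\<lambda>t. t powr \<gamma> / \<gamma>)"
      using \<gamma> by (intro continuous_intros continuous_on_powr') auto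
    show "((\<lambda>t. t powr \<gamma> / \<gamma>) has_vector_derivative t powr (\<gamma> - 1)) (at t)" if "t \<in> {0<..<N}" for t
      using that \<gamma> DERIV_cdivide[OF has_real_derivative_powr[of t \<gamma>], of \<gamma>]
      by (simp add: has_real_derivative_iff_has_vector_derivative)
  qed (use N in simp)
  then have "((\<lambda>t. c * t powr (\<gamma> - 1)) has_integral c * (N powr \<gamma> / \<gamma>)) {0..N}"
    using \<gamma> by (intro has_integral_mult_right) simp
  moreover have "(M has_integral Mhat M N) {0..N}"
    unfolding Mhat_def by (intro integrable_integral integrable_continuous_real continuous_on_subset[OF M]) auto
  moreover have "c * t powr (\<gamma> - 1) \<le> M t" if "t \<in> {0..N}" for t
  proof (cases "t = 0")
    case False
    then have "M N / N powr (\<gamma> - 1) \<le> M t / t powr (\<gamma> - 1)"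
      using that by (intro M2) auto
    then show ?thesis
      unfolding c_def using that False by (simp add: field_simps)
  qed (use \<gamma> M_nonneg in simp)
  ultimately have "c * (N powr \<gamma> / \<gamma>) \<le> Mhat M N"
    by (rule has_integral_le)
  moreover have "c * (N powr \<gamma> / \<gamma>) = M N * N / \<gamma>"
    unfolding c_def using N by (simp add: powr_diff)
  ultimately show ?thesis
    by linarith
qed

subsection \<open>The nonlinearity\<close>

lemma le_of_mono_on_quotient_powr:
  fixes f :: "real \<Rightarrow> real"
  assumes mono: "mono_on {0<..} (\<lambda>t. f t / t powr l)" and \<sigma>: "0 < \<sigma>" and a: "0 < a" "a \<le> 1"
  shows "f (a * \<sigma>) \<le> a powr l * f \<sigma>"
proof -
  have "f (a * \<sigma>) / (a * \<sigma>) powr l \<le> f \<sigma> / \<sigma> powr l"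
    using a \<sigma> by (intro mono_onD[OF mono]) (auto simp: mult_left_le_one_le)
  then have "f (a * \<sigma>) \<le> f \<sigma> / \<sigma> powr l * (a * \<sigma>) powr l"
    using a \<sigma> by (simp add: pos_divide_le_eq)
  also have "\<dots> = a powr l * f \<sigma>"
    using a \<sigma> by (simp add: powr_mult)
  finally show ?thesis .
qed

locale choquard_nonlinearity =
  fixes \<Omega> :: "'a::euclidean_space set" and \<mu> l :: real and g G :: "'a \<Rightarrow> real \<Rightarrow> real"
  assumes bounded_domain: "bounded \<Omega>" and open_domain: "open \<Omega>"
    and kernel_exponent: "0 < \<mu>" "\<mu> < real DIM('a)"
    and g_continuous: "continuous_on (closure \<Omega> \<times> UNIV) (\<lambda>z. g (fst z) (snd z))"
    and g_nonneg: "\<And>x t. x \<in> closure \<Omega> \<Longrightarrow> 0 \<le> g x t"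
    and g_nonpos_eq_0: "\<And>x t. x \<in> closure \<Omega> \<Longrightarrow> t \<le> 0 \<Longrightarrow> g x t = 0"
    and g_scaling: "\<And>x \<sigma> a. x \<in> \<Omega> \<Longrightarrow> 0 < \<sigma> \<Longrightarrow> 0 < a \<Longrightarrow> a \<le> 1 \<Longrightarrow> g x (a * \<sigma>) \<le> a powr l * g x \<sigma>"
    and G_def: "\<And>x t. G x t = integral {0..t} (g x)"
begin

lemma continuous_on_g: "x \<in> closure \<Omega> \<Longrightarrow> continuous_on S (g x)"
  by (rule continuous_on_compose2[OF g_continuous, where f="\<lambda>t. (x, t)", simplified])
     (auto intro!: continuous_intros)

lemma g_integrable: "x \<in> closure \<Omega> \<Longrightarrow> g x integrable_on {a..b}"
  by (intro integrable_continuous_interval continuous_on_g)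

lemma G_nonpos_eq_0: "t \<le> 0 \<Longrightarrow> G x t = 0"
  using G_def by (cases "t = 0") auto

lemma G_eq_integral_01:
  assumes x: "x \<in> closure \<Omega>"
  shows "G x t = integral {0..1} (\<lambda>r. t * g x (t * r))"
proof (cases "t > 0")
  case True
  have "(g x has_integral G x t) {0..t}"
    using G_def g_integrable[OF x] by (simp add: has_integral_integral)
  from has_integral_stretch_real[OF this, of t] True
  have "((\<lambda>r. g x (t * r)) has_integral (1 / t) *\<^sub>R G x t) ((\<lambda>r. r / t) ` {0..t})"
    by simp
  moreover have "(\<lambda>r. r / t) ` {0..t} = {0..1}"
    using True image_affinity_atLeastAtMost[of "1 / t" 0 t 0] by (simp add: field_simps)
  ultimately have "((\<lambda>r. t * g x (t * r)) has_integral G x t) {0..1}"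
    using True has_integral_mult_right[of "\<lambda>r. g x (t * r)" "G x t / t" "{0..1}" t] by simp
  then show ?thesis
    by (rule integral_unique[symmetric])
next
  case False
  have "integral {0..1} (\<lambda>r. t * g x (t * r)) = integral {0..1} (\<lambda>r::real. 0::real)"
    using False x g_nonpos_eq_0
    by (intro Henstock_Kurzweil_Integration.integral_cong) (auto simp: mult_nonpos_nonneg)
  then show ?thesis
    using False G_nonpos_eq_0 by simp
qed

lemma G_continuous: "continuous_on (closure \<Omega> \<times> UNIV) (\<lambda>z. G (fst z) (snd z))"
proof -
  have "continuous_on ((closure \<Omega> \<times> UNIV) \<times> cbox 0 1)
      (\<lambda>q. g (fst (fst (fst q), snd (fst q) * snd q)) (snd (fst (fst q), snd (fst q) * snd q)))"
    by (rule continuous_on_compose2[OF g_continuous]) (auto intro!: continuous_intros)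
  then have "continuous_on ((closure \<Omega> \<times> UNIV) \<times> cbox 0 1)
      (\<lambda>(z, r). snd z * g (fst z) (snd z * (r::real)))"
    by (auto simp: split_beta intro!: continuous_intros)
  from integral_continuous_on_param[OF this]
  have "continuous_on (closure \<Omega> \<times> UNIV) (\<lambda>z. integral {0..1} (\<lambda>r. snd z * g (fst z) (snd z * r)))"
    by simp
  then show ?thesis
    by (rule continuous_on_eq) (auto simp: G_eq_integral_01)
qed

lemma G_nonneg: "x \<in> closure \<Omega> \<Longrightarrow> 0 \<le> G x t"
  using G_def g_nonneg G_nonpos_eq_0[of t x]
  by (cases "t \<ge> 0") (auto intro!: integral_nonneg g_integrable)

lemma G_nonneg_domain: "y \<in> \<Omega> \<Longrightarrow> 0 \<le> G y t"
  using G_nonneg closure_subset by blast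

lemma G_mono:
  assumes x: "x \<in> closure \<Omega>" and le: "t1 \<le> t2"
  shows "G x t1 \<le> G x t2"
proof (cases "t1 \<ge> 0")
  case True
  have "integral {0..t1} (g x) + integral {t1..t2} (g x) = integral {0..t2} (g x)"
    using Henstock_Kurzweil_Integration.integral_combine[of 0 t1 t2 "g x"] True le g_integrable[OF x]
    by simp
  moreover have "integral {t1..t2} (g x) \<ge> 0"
    using g_nonneg x by (auto intro!: integral_nonneg g_integrable)
  ultimately show ?thesis
    using G_def by simp
next
  case False
  then show ?thesis
    using G_nonpos_eq_0[of t1 x] G_nonneg[OF x] by simp
qed

lemma G_mono_domain: "y \<in> \<Omega> \<Longrightarrow> t1 \<le> t2 \<Longrightarrow> G y t1 \<le> G y t2"
  using G_mono closure_subset by blast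

lemma G_bounded_closure: "\<exists>B. \<forall>y\<in>closure \<Omega>. \<bar>G y T\<bar> \<le> B"
proof -
  have "compact ((\<lambda>y. G y T) ` closure \<Omega>)"
    using bounded_domain
    by (intro compact_continuous_image continuous_on_compose2[OF G_continuous, where f="\<lambda>y. (y, T)", simplified])
       (auto simp: compact_closure intro!: continuous_intros)
  then show ?thesis
    using compact_imp_bounded by (fastforce simp: bounded_iff)
qed

lemma G_scaling:
  assumes x: "x \<in> \<Omega>" and a: "0 < a" "a \<le> 1"
  shows "G x (a * \<tau>) \<le> a powr (l + 1) * G x \<tau>"
proof (cases "\<tau> > 0")
  case True
  have xc: "x \<in> closure \<Omega>"
    using x closure_subset by blast
  have "integral {0..1} (\<lambda>r. (a * \<tau>) * g x ((a * \<tau>) * r))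
      \<le> integral {0..1} (\<lambda>r. a powr (l + 1) * (\<tau> * g x (\<tau> * r)))"
  proof (rule integral_le)
    show "(\<lambda>r. (a * \<tau>) * g x ((a * \<tau>) * r)) integrable_on {0..1}"
      by (intro integrable_continuous_interval continuous_intros
          continuous_on_compose2[OF continuous_on_g[OF xc]]) auto
    show "(\<lambda>r. a powr (l + 1) * (\<tau> * g x (\<tau> * r))) integrable_on {0..1}"
      by (intro integrable_continuous_interval continuous_intros
          continuous_on_compose2[OF continuous_on_g[OF xc]]) auto
    fix r :: real
    assume r: "r \<in> {0..1}"
    show "(a * \<tau>) * g x ((a * \<tau>) * r) \<le> a powr (l + 1) * (\<tau> * g x (\<tau> * r))"
    proof (cases "r = 0")
      case False
      then have "g x (a * (\<tau> * r)) \<le> a powr l * g x (\<tau> * r)"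
        using r True x a by (intro g_scaling) auto
      then have "(a * \<tau>) * g x (a * (\<tau> * r)) \<le> (a * \<tau>) * (a powr l * g x (\<tau> * r))"
        using a True by (intro mult_left_mono) auto
      then show ?thesis
        using a by (simp add: powr_add mult_ac)
    qed (use g_nonpos_eq_0 xc in simp)
  qed
  then show ?thesis
    using G_eq_integral_01[OF xc, of "a * \<tau>"] G_eq_integral_01[OF xc, of \<tau>] by simp
next
  case False
  then have "a * \<tau> \<le> 0"
    using a by (simp add: mult_nonneg_nonpos)
  then show ?thesis
    using G_nonpos_eq_0 G_nonneg_domain[OF x, of \<tau>] by simp
qed

lemma borel_measurable_G [measurable]:
  assumes [measurable]: "w \<in> borel_measurable lebesgue"
  shows "(\<lambda>y. indicator \<Omega> y * G y (w y)) \<in> borel_measurable lebesgue"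
proof -
  have "continuous_on (\<Omega> \<times> UNIV) (\<lambda>z. G (fst z) (snd z))"
    by (rule continuous_on_subset[OF G_continuous]) (use closure_subset in auto)
  then have "(\<lambda>z. indicator (\<Omega> \<times> UNIV) z *\<^sub>R G (fst z) (snd z)) \<in> borel_measurable borel"
    using open_domain by (intro borel_measurable_continuous_on_indicator) (auto intro: open_Times borel_open)
  then have "(\<lambda>z. indicator (\<Omega> \<times> UNIV) z *\<^sub>R G (fst z) (snd z)) \<in> borel_measurable (borel \<Otimes>\<^sub>M borel)"
    by (simp add: borel_prod)
  from measurable_compose[OF _ this, of "\<lambda>y. (y, w y)"] show ?thesis
    by (simp add: indicator_def)
qed

end

subsection \<open>The Choquard term\<close>

context choquard_nonlinearity
begin

definition riesz_potential :: "('a \<Rightarrow> real) \<Rightarrow> 'a \<Rightarrow> ennreal" where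
  "riesz_potential w x = (\<integral>\<^sup>+ y. ennreal (indicator \<Omega> y * (G y (w y) / norm (x - y) powr \<mu>)) \<partial>lebesgue)"

definition choquard_energy :: "('a \<Rightarrow> real) \<Rightarrow> ennreal" where
  "choquard_energy w = (\<integral>\<^sup>+ x. riesz_potential w x * ennreal (indicator \<Omega> x * G x (w x)) \<partial>lebesgue)"

text \<open>The Bochner integrals in J_fun vanish where the integrand is not integrable, so
  choquard_integral agrees with choquard_energy only where the latter is finite.\<close>

definition choquard_integral :: "('a \<Rightarrow> real) \<Rightarrow> real" where
  "choquard_integral w =
     (LINT x:\<Omega>|lebesgue. (LINT y:\<Omega>|lebesgue. G y (w y) / norm (x - y) powr \<mu>) * G x (w x))"

lemma borel_measurable_riesz_integrand [measurable]:
  assumes [measurable]: "w \<in> borel_measurable lebesgue"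
  shows "(\<lambda>y. indicator \<Omega> y * (G y (w y) / norm (x - y) powr \<mu>)) \<in> borel_measurable lebesgue"
proof -
  have "(\<lambda>y. (indicator \<Omega> y * G y (w y)) / norm (x - y) powr \<mu>) \<in> borel_measurable lebesgue"
    by measurable
  then show ?thesis
    by simp
qed

lemma borel_measurable_riesz_potential [measurable]:
  assumes [measurable]: "w \<in> borel_measurable lebesgue"
  shows "riesz_potential w \<in> borel_measurable lebesgue"
proof -
  have [measurable]: "(\<lambda>z. indicator \<Omega> (snd z) * G (snd z) (w (snd z)))
      \<in> borel_measurable (lebesgue \<Otimes>\<^sub>M lebesgue)"
    by (rule measurable_compose[OF measurable_snd borel_measurable_G[OF assms]])
  have "(\<lambda>z. (indicator \<Omega> (snd z) * G (snd z) (w (snd z))) / norm (fst z - snd z) powr \<mu>)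
      \<in> borel_measurable (lebesgue \<Otimes>\<^sub>M lebesgue)"
    by measurable
  then have "(\<lambda>(x, y). ennreal (indicator \<Omega> y * (G y (w y) / norm (x - y) powr \<mu>)))
      \<in> borel_measurable (lebesgue \<Otimes>\<^sub>M lebesgue)"
    by (simp add: split_beta)
  then show ?thesis
    unfolding riesz_potential_def[abs_def]
    by (rule sigma_finite_measure.borel_measurable_nn_integral[OF sigma_finite_lebesgue])
qed

lemma borel_measurable_choquard_integrand [measurable]:
  assumes [measurable]: "w \<in> borel_measurable lebesgue"
  shows "(\<lambda>x. riesz_potential w x * ennreal (indicator \<Omega> x * G x (w x))) \<in> borel_measurable lebesgue"
  by measurable

lemma set_integral_riesz_eq_enn2real:
  assumes w [measurable]: "w \<in> borel_measurable lebesgue"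
  shows "(LINT y:\<Omega>|lebesgue. G y (w y) / norm (x - y) powr \<mu>) = enn2real (riesz_potential w x)"
proof -
  have "(LINT y:\<Omega>|lebesgue. G y (w y) / norm (x - y) powr \<mu>)
      = integral\<^sup>L lebesgue (\<lambda>y. indicator \<Omega> y * (G y (w y) / norm (x - y) powr \<mu>))"
    by (simp add: set_lebesgue_integral_def)
  also have "\<dots> = enn2real (riesz_potential w x)"
    unfolding riesz_potential_def using G_nonneg_domain
    by (intro integral_eq_nn_integral borel_measurable_riesz_integrand[OF w] AE_I2)
       (simp add: indicator_def)
  finally show ?thesis .
qed

lemma choquard_integral_eq_energy:
  assumes w [measurable]: "w \<in> borel_measurable lebesgue" and finite: "choquard_energy w < \<infinity>"
  shows "choquard_integral w = enn2real (choquard_energy w)"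
proof -
  have "choquard_integral w
      = integral\<^sup>L lebesgue (\<lambda>x. enn2real (riesz_potential w x) * (indicator \<Omega> x * G x (w x)))"
    by (simp only: choquard_integral_def set_integral_riesz_eq_enn2real[OF w])
       (simp add: set_lebesgue_integral_def mult_ac)
  also have "\<dots> = enn2real (\<integral>\<^sup>+ x. ennreal (enn2real (riesz_potential w x) * (indicator \<Omega> x * G x (w x))) \<partial>lebesgue)"
    using G_nonneg_domain by (intro integral_eq_nn_integral) (measurable, auto simp: indicator_def)
  also have "(\<integral>\<^sup>+ x. ennreal (enn2real (riesz_potential w x) * (indicator \<Omega> x * G x (w x))) \<partial>lebesgue)
      = choquard_energy w"
    unfolding choquard_energy_def
  proof (intro nn_integral_cong_AE)
    have "AE x in lebesgue. riesz_potential w x * ennreal (indicator \<Omega> x * G x (w x)) \<noteq> \<infinity>"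
      using finite unfolding choquard_energy_def by (intro nn_integral_PInf_AE) auto
    then show "AE x in lebesgue. ennreal (enn2real (riesz_potential w x) * (indicator \<Omega> x * G x (w x)))
        = riesz_potential w x * ennreal (indicator \<Omega> x * G x (w x))"
    proof eventually_elim
      case (elim x)
      moreover have "0 \<le> indicator \<Omega> x * G x (w x)"
        using G_nonneg_domain by (simp add: indicator_def)
      ultimately show ?case
        by (cases "indicator \<Omega> x * G x (w x) = 0")
           (auto simp: ennreal_mult ennreal_enn2real_if ennreal_mult_eq_top_iff)
    qed
  qed
  finally show ?thesis .
qed

lemma riesz_potential_mono:
  assumes "\<And>y. y \<in> \<Omega> \<Longrightarrow> v y \<le> w y"
  shows "riesz_potential v x \<le> riesz_potential w x"
  unfolding riesz_potential_def
  using assms G_mono_domain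
  by (intro nn_integral_mono ennreal_leI) (auto simp: indicator_def intro!: divide_right_mono)

lemma choquard_energy_mono:
  assumes "\<And>y. y \<in> \<Omega> \<Longrightarrow> v y \<le> w y"
  shows "choquard_energy v \<le> choquard_energy w"
  unfolding choquard_energy_def
proof (rule nn_integral_mono)
  fix x
  have "ennreal (indicator \<Omega> x * G x (v x)) \<le> ennreal (indicator \<Omega> x * G x (w x))"
    using assms G_mono_domain by (cases "x \<in> \<Omega>") (auto intro!: ennreal_leI)
  then show "riesz_potential v x * ennreal (indicator \<Omega> x * G x (v x))
      \<le> riesz_potential w x * ennreal (indicator \<Omega> x * G x (w x))"
    by (intro mult_mono riesz_potential_mono assms) auto
qed

lemma riesz_potential_scaling:
  assumes w [measurable]: "w \<in> borel_measurable lebesgue" and a: "0 < a" "a \<le> 1"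
  shows "riesz_potential (\<lambda>x. a * w x) x \<le> ennreal (a powr (l + 1)) * riesz_potential w x"
proof -
  have "riesz_potential (\<lambda>x. a * w x) x
      \<le> (\<integral>\<^sup>+ y. ennreal (a powr (l + 1)) * ennreal (indicator \<Omega> y * (G y (w y) / norm (x - y) powr \<mu>)) \<partial>lebesgue)"
    unfolding riesz_potential_def
  proof (rule nn_integral_mono)
    fix y
    show "ennreal (indicator \<Omega> y * (G y (a * w y) / norm (x - y) powr \<mu>))
        \<le> ennreal (a powr (l + 1)) * ennreal (indicator \<Omega> y * (G y (w y) / norm (x - y) powr \<mu>))"
    proof (cases "y \<in> \<Omega>")
      case True
      then have "G y (a * w y) / norm (x - y) powr \<mu> \<le> a powr (l + 1) * (G y (w y) / norm (x - y) powr \<mu>)"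
        using G_scaling[OF True a] by (simp add: divide_right_mono)
      then show ?thesis
        using True G_nonneg_domain[OF True] by (simp add: ennreal_mult[symmetric] ennreal_leI)
    qed simp
  qed
  also have "\<dots> = ennreal (a powr (l + 1)) * riesz_potential w x"
    unfolding riesz_potential_def by (intro nn_integral_cmult) measurable
  finally show ?thesis .
qed

lemma choquard_energy_scaling:
  assumes w [measurable]: "w \<in> borel_measurable lebesgue" and a: "0 < a" "a \<le> 1"
  shows "choquard_energy (\<lambda>x. a * w x) \<le> ennreal (a powr (2 * l + 2)) * choquard_energy w"
proof -
  have "choquard_energy (\<lambda>x. a * w x)
      \<le> (\<integral>\<^sup>+ x. ennreal (a powr (2 * l + 2)) * (riesz_potential w x * ennreal (indicator \<Omega> x * G x (w x))) \<partial>lebesgue)"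
    unfolding choquard_energy_def
  proof (rule nn_integral_mono)
    fix x
    have G: "ennreal (indicator \<Omega> x * G x (a * w x)) \<le> ennreal (a powr (l + 1)) * ennreal (indicator \<Omega> x * G x (w x))"
      using G_scaling[of x a "w x"] G_nonneg_domain[of x "w x"] a
      by (cases "x \<in> \<Omega>") (auto simp: ennreal_mult[symmetric] intro: ennreal_leI)
    have "riesz_potential (\<lambda>x. a * w x) x * ennreal (indicator \<Omega> x * G x (a * w x))
        \<le> (ennreal (a powr (l + 1)) * riesz_potential w x) * (ennreal (a powr (l + 1)) * ennreal (indicator \<Omega> x * G x (w x)))"
      by (intro mult_mono riesz_potential_scaling[OF w a] G) auto
    also have "\<dots> = (ennreal (a powr (l + 1)) * ennreal (a powr (l + 1)))
        * (riesz_potential w x * ennreal (indicator \<Omega> x * G x (w x)))"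
      by (simp add: mult_ac)
    also have "\<dots> = ennreal (a powr (2 * l + 2)) * (riesz_potential w x * ennreal (indicator \<Omega> x * G x (w x)))"
      using powr_add[of a "l + 1" "l + 1"] by (simp add: ennreal_mult[symmetric])
    finally show "riesz_potential (\<lambda>x. a * w x) x * ennreal (indicator \<Omega> x * G x (a * w x))
        \<le> ennreal (a powr (2 * l + 2)) * (riesz_potential w x * ennreal (indicator \<Omega> x * G x (w x)))" .
  qed
  also have "\<dots> = ennreal (a powr (2 * l + 2)) * choquard_energy w"
    unfolding choquard_energy_def by (intro nn_integral_cmult) measurable
  finally show ?thesis .
qed

lemma choquard_integral_scaling:
  assumes w [measurable]: "w \<in> borel_measurable lebesgue" and finite: "choquard_energy w < \<infinity>"
    and a: "0 < a" "a \<le> 1"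
  shows "choquard_integral (\<lambda>x. a * w x) \<le> a powr (2 * l + 2) * choquard_integral w"
proof -
  have le: "choquard_energy (\<lambda>x. a * w x) \<le> ennreal (a powr (2 * l + 2)) * choquard_energy w"
    by (rule choquard_energy_scaling[OF w a])
  also have "\<dots> < \<infinity>"
    using finite by (simp add: ennreal_mult_less_top)
  finally have "choquard_integral (\<lambda>x. a * w x) = enn2real (choquard_energy (\<lambda>x. a * w x))"
    by (intro choquard_integral_eq_energy) auto
  also have "\<dots> \<le> enn2real (ennreal (a powr (2 * l + 2)) * choquard_energy w)"
    using le finite by (intro enn2real_mono) (auto simp: ennreal_mult_less_top)
  also have "\<dots> = a powr (2 * l + 2) * choquard_integral w"
    using choquard_integral_eq_energy[OF w finite] by (simp add: enn2real_mult)
  finally show ?thesis .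
qed

lemma riesz_potential_truncation_SUP:
  assumes w [measurable]: "w \<in> borel_measurable lebesgue"
  shows "riesz_potential w x = (SUP m. riesz_potential (\<lambda>y. min (w y) (real m)) x)"
proof -
  define f where "f m y = ennreal (indicator \<Omega> y * (G y (min (w y) (real m)) / norm (x - y) powr \<mu>))"
    for m y
  have f_le: "f m y \<le> f m' y" if "min (w y) (real m) \<le> min (w y) (real m')" for m m' y
    unfolding f_def using that G_mono_domain
    by (cases "y \<in> \<Omega>") (auto intro!: ennreal_leI divide_right_mono)
  have "incseq f"
    by (intro incseq_SucI le_funI f_le) auto
  moreover have "f m \<in> borel_measurable lebesgue" for m
    unfolding f_def by measurable
  moreover have "(SUP m. f m y) = ennreal (indicator \<Omega> y * (G y (w y) / norm (x - y) powr \<mu>))" for y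
  proof -
    have "min (w y) (real (nat \<lceil>w y\<rceil>)) = w y"
      by linarith
    then have "(SUP m. f m y) = f (nat \<lceil>w y\<rceil>) y"
      by (intro antisym SUP_upper SUP_least f_le) auto
    then show ?thesis
      unfolding f_def using \<open>min (w y) _ = w y\<close> by simp
  qed
  ultimately show ?thesis
    unfolding riesz_potential_def f_def[symmetric]
    by (simp add: nn_integral_monotone_convergence_SUP[symmetric])
qed

lemma choquard_integrand_le_SUP_truncations:
  assumes w [measurable]: "w \<in> borel_measurable lebesgue"
  shows "riesz_potential w x * ennreal (indicator \<Omega> x * G x (w x))
    \<le> (SUP m. riesz_potential (\<lambda>y. min (w y) (real m)) x
        * ennreal (indicator \<Omega> x * G x (min (w x) (real m))))"
    (is "_ \<le> (SUP m. ?h m)")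
proof -
  define c where "c = ennreal (indicator \<Omega> x * G x (w x))"
  define mx where "mx = nat \<lceil>w x\<rceil>"
  have "riesz_potential w x * c = (SUP m. riesz_potential (\<lambda>y. min (w y) (real m)) x * c)"
    unfolding riesz_potential_truncation_SUP[OF w, of x] by (rule SUP_mult_right_ennreal)
  also have "\<dots> \<le> (SUP m. ?h m)"
  proof (rule SUP_least)
    fix m
    have "min (w x) (real (max m mx)) = w x"
      unfolding mx_def by linarith
    then have "riesz_potential (\<lambda>y. min (w y) (real m)) x * c \<le> ?h (max m mx)"
      unfolding c_def by (auto intro!: mult_right_mono riesz_potential_mono)
    also have "\<dots> \<le> (SUP m. ?h m)"
      by (rule SUP_upper) simp
    finally show "riesz_potential (\<lambda>y. min (w y) (real m)) x * c \<le> (SUP m. ?h m)" .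
  qed
  finally show ?thesis
    unfolding c_def .
qed

lemma choquard_energy_le_of_truncations:
  assumes w [measurable]: "w \<in> borel_measurable lebesgue"
    and K: "\<And>m. m \<ge> m0 \<Longrightarrow> choquard_energy (\<lambda>y. min (w y) (real m)) \<le> K"
  shows "choquard_energy w \<le> K"
proof -
  define wm where "wm m y = min (w y) (real m)" for m y
  define h where "h m x = riesz_potential (wm m) x * ennreal (indicator \<Omega> x * G x (wm m x))" for m x
  have h_mono: "h m x \<le> h m' x" if "m \<le> m'" for m m' x
  proof -
    have le: "wm m y \<le> wm m' y" for y
      using that unfolding wm_def by auto
    have "ennreal (indicator \<Omega> x * G x (wm m x)) \<le> ennreal (indicator \<Omega> x * G x (wm m' x))"
      using le G_mono_domain by (cases "x \<in> \<Omega>") (auto intro!: ennreal_leI)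
    then show ?thesis
      unfolding h_def by (intro mult_mono riesz_potential_mono le) auto
  qed
  have h_meas: "h m \<in> borel_measurable lebesgue" for m
    unfolding h_def by (rule borel_measurable_choquard_integrand) (unfold wm_def, measurable)
  have pointwise: "riesz_potential w x * ennreal (indicator \<Omega> x * G x (w x)) \<le> (SUP m. h m x)" for x
    unfolding h_def wm_def by (rule choquard_integrand_le_SUP_truncations[OF w])
  have "choquard_energy w \<le> (\<integral>\<^sup>+ x. (SUP m. h m x) \<partial>lebesgue)"
    unfolding choquard_energy_def by (rule nn_integral_mono) (rule pointwise)
  also have "\<dots> = (SUP m. integral\<^sup>N lebesgue (h m))"
    using h_meas by (intro nn_integral_monotone_convergence_SUP incseq_SucI le_funI h_mono) auto
  also have "\<dots> \<le> K"
  proof (rule SUP_least)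
    fix m
    have "integral\<^sup>N lebesgue (h m) = choquard_energy (wm m)"
      unfolding h_def choquard_energy_def ..
    also have "\<dots> \<le> choquard_energy (wm (max m m0))"
      by (rule choquard_energy_mono) (auto simp: wm_def)
    also have "\<dots> \<le> K"
      using K[of "max m m0"] unfolding wm_def by simp
    finally show "integral\<^sup>N lebesgue (h m) \<le> K" .
  qed
  finally show ?thesis .
qed

lemma riesz_potential_bounded:
  assumes B: "\<And>y. y \<in> \<Omega> \<Longrightarrow> G y (w y) \<le> B"
  shows "\<exists>K. \<forall>x\<in>\<Omega>. riesz_potential w x \<le> ennreal K"
proof -
  obtain D where D: "\<And>y. y \<in> \<Omega> \<Longrightarrow> norm y \<le> D"
    using bounded_domain unfolding bounded_iff by auto
  define R where "R = 2 * \<bar>D\<bar> + 1"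
  have "0 < R"
    unfolding R_def by simp
  then obtain K where K: "\<And>x::'a. (\<integral>\<^sup>+ y. indicator (ball x R) y * ennreal (norm (x - y) powr (-\<mu>)) \<partial>lebesgue)
      \<le> ennreal K"
    using riesz_kernel_ball_integral_bounded[OF _ kernel_exponent] by blast
  define B' where "B' = max B 0"
  have B': "0 \<le> B'"
    unfolding B'_def by simp
  have "riesz_potential w x \<le> ennreal B' * ennreal K" if x: "x \<in> \<Omega>" for x
  proof -
    have "riesz_potential w x
        \<le> (\<integral>\<^sup>+ y. ennreal B' * (indicator (ball x R) y * ennreal (norm (x - y) powr (-\<mu>))) \<partial>lebesgue)"
      unfolding riesz_potential_def
    proof (rule nn_integral_mono)
      fix y
      show "ennreal (indicator \<Omega> y * (G y (w y) / norm (x - y) powr \<mu>))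
          \<le> ennreal B' * (indicator (ball x R) y * ennreal (norm (x - y) powr (-\<mu>)))"
      proof (cases "y \<in> \<Omega>")
        case True
        have "norm (x - y) \<le> norm x + norm y"
          by (rule norm_triangle_ineq4)
        then have "y \<in> ball x R"
          using D[OF x] D[OF True] abs_ge_self[of D] unfolding R_def mem_ball dist_norm by linarith
        have "G y (w y) / norm (x - y) powr \<mu> = G y (w y) * norm (x - y) powr (-\<mu>)"
          by (simp add: powr_minus divide_inverse)
        also have "\<dots> \<le> B' * norm (x - y) powr (-\<mu>)"
          using B[OF True] unfolding B'_def by (intro mult_right_mono) auto
        finally have "ennreal (G y (w y) / norm (x - y) powr \<mu>) \<le> ennreal B' * ennreal (norm (x - y) powr (-\<mu>))"
          using B' by (simp add: ennreal_mult'[symmetric] ennreal_leI)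
        then show ?thesis
          using True \<open>y \<in> ball x R\<close> by simp
      qed simp
    qed
    also have "\<dots> = ennreal B' * (\<integral>\<^sup>+ y. indicator (ball x R) y * ennreal (norm (x - y) powr (-\<mu>)) \<partial>lebesgue)"
      by (rule nn_integral_cmult) measurable
    also have "\<dots> \<le> ennreal B' * ennreal K"
      by (intro mult_left_mono K) auto
    finally show ?thesis .
  qed
  then show ?thesis
    using B' by (auto simp: ennreal_mult'[symmetric])
qed

lemma choquard_energy_finite_if_bounded_above:
  assumes w [measurable]: "w \<in> borel_measurable lebesgue" and T: "\<And>y. w y \<le> T"
  shows "choquard_energy w < \<infinity>"
proof -
  obtain B where B: "\<And>y. y \<in> closure \<Omega> \<Longrightarrow> \<bar>G y T\<bar> \<le> B"
    using G_bounded_closure by blast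
  have GB: "G y (w y) \<le> B" if "y \<in> \<Omega>" for y
  proof -
    have "G y (w y) \<le> G y T"
      by (rule G_mono_domain[OF that T])
    moreover have "\<bar>G y T\<bar> \<le> B"
      using B that closure_subset by blast
    ultimately show ?thesis
      by linarith
  qed
  obtain K where K: "\<And>x. x \<in> \<Omega> \<Longrightarrow> riesz_potential w x \<le> ennreal K"
    using riesz_potential_bounded[OF GB] by blast
  have "choquard_energy w \<le> (\<integral>\<^sup>+ x. (ennreal K * ennreal B) * indicator \<Omega> x \<partial>lebesgue)"
    unfolding choquard_energy_def
  proof (intro nn_integral_mono)
    fix x
    show "riesz_potential w x * ennreal (indicator \<Omega> x * G x (w x)) \<le> (ennreal K * ennreal B) * indicator \<Omega> x"
    proof (cases "x \<in> \<Omega>")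
      case True
      then have "riesz_potential w x * ennreal (G x (w x)) \<le> ennreal K * ennreal B"
        using K GB by (intro mult_mono ennreal_leI) auto
      then show ?thesis
        using True by simp
    qed simp
  qed
  also have "\<dots> = (ennreal K * ennreal B) * emeasure lebesgue \<Omega>"
    using open_domain by (intro nn_integral_cmult_indicator) (simp add: borel_open)
  also have "\<dots> < top"
  proof -
    have "emeasure lebesgue \<Omega> < top"
      using fmeasurableD2[OF lmeasurable_open[OF bounded_domain open_domain]] by (simp only: less_top)
    moreover have "ennreal K * ennreal B < top"
      by (simp add: ennreal_mult_less_top)
    ultimately show ?thesis
      by (simp only: ennreal_mult_less_top) blast
  qed
  finally show ?thesis
    by simp
qed

end

subsection \<open>The energy functional\<close>

lemma le_of_square_le_affine:
  fixes a b c \<nu> :: real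
  assumes "0 < a" "1 \<le> \<nu>" "0 \<le> b" "a * \<nu>\<^sup>2 \<le> b + c * \<nu>"
  shows "\<nu> \<le> (b + c) / a"
proof -
  have "(a * \<nu>) * \<nu> \<le> (b + c) * \<nu>"
    using assms mult_left_mono[of 1 \<nu> b] by (simp add: power2_eq_square algebra_simps)
  then have "a * \<nu> \<le> b + c"
    using assms(2) by simp
  then show ?thesis
    using assms(1) by (simp add: field_simps)
qed

locale kirchhoff_choquard = choquard_nonlinearity \<Omega> \<mu> l g G
  for \<Omega> :: "'a::euclidean_space set" and \<mu> l :: real and g G :: "'a \<Rightarrow> real \<Rightarrow> real" +
  fixes s :: real and M :: "real \<Rightarrow> real"
  assumes s_pos: "0 < s"
    and M_continuous: "continuous_on {0..} M"
    and M_nonneg: "\<And>t. 0 \<le> t \<Longrightarrow> 0 \<le> M t"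
begin

lemma J_fun_eq:
  "J_fun s \<mu> M G \<Omega> u = s / real DIM('a) * Mhat M (enn2real (gagliardo (real DIM('a) / s) s u))
     - 1/2 * choquard_integral u"
  unfolding J_fun_def choquard_integral_def X0_norm_powr[OF s_pos] ..

lemma choquard_integral_le_of_J_fun_ge:
  assumes "gagliardo (real DIM('a) / s) s w \<le> gagliardo (real DIM('a) / s) s u"
    and "gagliardo (real DIM('a) / s) s u < \<infinity>"
    and "J_fun s \<mu> M G \<Omega> u - c \<le> J_fun s \<mu> M G \<Omega> w"
  shows "choquard_integral w \<le> 2 * (s / real DIM('a) * Mhat M (enn2real (gagliardo (real DIM('a) / s) s u))
     - J_fun s \<mu> M G \<Omega> u + c)"
proof -
  define A where "A = s / real DIM('a) * Mhat M (enn2real (gagliardo (real DIM('a) / s) s u))"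
  define Aw where "Aw = s / real DIM('a) * Mhat M (enn2real (gagliardo (real DIM('a) / s) s w))"
  have "Mhat M (enn2real (gagliardo (real DIM('a) / s) s w))
      \<le> Mhat M (enn2real (gagliardo (real DIM('a) / s) s u))"
    using assms(1,2) by (intro Mhat_mono M_continuous M_nonneg enn2real_mono) auto
  then have "Aw \<le> A"
    unfolding A_def Aw_def using s_pos by (intro mult_left_mono) auto
  moreover have "J_fun s \<mu> M G \<Omega> w = Aw - 1/2 * choquard_integral w"
    unfolding Aw_def by (rule J_fun_eq)
  ultimately have "1/2 * choquard_integral w \<le> A - J_fun s \<mu> M G \<Omega> u + c"
    using assms(3) by linarith
  then have "2 * (1/2 * choquard_integral w) \<le> 2 * (A - J_fun s \<mu> M G \<Omega> u + c)"
    by (rule mult_left_mono) simp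
  then show ?thesis
    unfolding A_def by simp
qed

lemma choquard_energy_finite_if_differentiable:
  assumes u: "u \<in> X0 s \<Omega>" and d: "has_X0_derivative s \<Omega> (J_fun s \<mu> M G \<Omega>) L u"
  shows "choquard_energy u < \<infinity>"
proof -
  define J where "J = J_fun s \<mu> M G \<Omega>"
  have [measurable]: "u \<in> borel_measurable lebesgue"
    using u by (rule X0_borel_measurable)
  obtain m0 where m0: "\<And>m. m \<ge> m0 \<Longrightarrow> J u - 1 \<le> J (\<lambda>x. min (u x) (real m))"
    using has_X0_derivative_truncation_ge[OF d u s_pos] unfolding J_def by blast
  define K where "K = 2 * (s / real DIM('a) * Mhat M (enn2real (gagliardo (real DIM('a) / s) s u)) - J u + 1)"
  have "choquard_energy (\<lambda>y. min (u y) (real m)) \<le> ennreal K" if "m \<ge> m0" for m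
  proof -
    define w where "w = (\<lambda>x. min (u x) (real m))"
    have w_meas: "w \<in> borel_measurable lebesgue"
      unfolding w_def by measurable
    have "gagliardo (real DIM('a) / s) s w \<le> gagliardo (real DIM('a) / s) s u"
      unfolding w_def using s_pos by (intro gagliardo_mono) (auto simp: min_def abs_if)
    then have "choquard_integral w \<le> K"
      using m0[OF that] unfolding K_def J_def w_def
      by (intro choquard_integral_le_of_J_fun_ge X0_gagliardo_finite[OF u])
    moreover have "choquard_energy w < \<infinity>"
      using w_meas by (rule choquard_energy_finite_if_bounded_above[of w "real m"]) (simp add: w_def)
    then have "choquard_energy w = ennreal (choquard_integral w)"
      using choquard_integral_eq_energy[OF w_meas] by simp
    ultimately show ?thesis
      unfolding w_def by (simp add: ennreal_leI)
  qed
  then have "choquard_energy u \<le> ennreal K"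
    by (rule choquard_energy_le_of_truncations[rotated]) measurable
  then show ?thesis
    using le_less_trans by fastforce
qed

lemma has_X0_derivative_self_le:
  assumes u: "u \<in> X0 s \<Omega>" and d: "has_X0_derivative s \<Omega> (J_fun s \<mu> M G \<Omega>) L u"
    and N_def: "N = enn2real (gagliardo (real DIM('a) / s) s u)" and N: "0 < N"
  shows "L u \<le> M N * N - (l + 1) * choquard_integral u"
proof -
  define n where "n = real DIM('a)"
  define p where "p = n / s"
  define \<beta> where "\<beta> = choquard_integral u"
  define \<phi> where "\<phi> a = s / n * Mhat M (a powr p * N) - 1/2 * (a powr (2 * l + 2) * \<beta>)" for a
  have [measurable]: "u \<in> borel_measurable lebesgue"
    using u by (rule X0_borel_measurable)
  show ?thesis
  proof (rule has_X0_derivative_le_of_minorant[OF d u s_pos])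
    fix a :: real
    assume a: "0 < a" "a < 1"
    have "enn2real (gagliardo p s (\<lambda>x. a * u x)) = a powr p * N"
      unfolding N_def p_def n_def using gagliardo_cmult[of u "real DIM('a) / s" s a] s_pos a
      by (simp add: enn2real_mult)
    moreover have "choquard_integral (\<lambda>x. a * u x) \<le> a powr (2 * l + 2) * \<beta>"
      unfolding \<beta>_def using choquard_energy_finite_if_differentiable[OF u d] a
      by (intro choquard_integral_scaling) auto
    ultimately show "\<phi> a \<le> J_fun s \<mu> M G \<Omega> (\<lambda>x. a * u x)"
      unfolding \<phi>_def J_fun_eq p_def n_def by simp
  next
    show "\<phi> 1 = J_fun s \<mu> M G \<Omega> u"
      unfolding \<phi>_def J_fun_eq \<beta>_def N_def p_def n_def by simp
  next
    have "((\<lambda>a. Mhat M (a powr p * N)) has_real_derivative M N * (p * N)) (at 1)"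
      using DERIV_chain2[OF _ DERIV_cmult_right[OF has_real_derivative_powr[of 1 p]]]
        Mhat_has_real_derivative[OF M_continuous N] by simp
    moreover have "((\<lambda>a. a powr (2 * l + 2) * \<beta>) has_real_derivative (2 * l + 2) * \<beta>) (at 1)"
      using DERIV_cmult_right[OF has_real_derivative_powr[of 1 "2 * l + 2"], of \<beta>] by simp
    ultimately have "(\<phi> has_real_derivative s / n * (M N * (p * N)) - 1/2 * ((2 * l + 2) * \<beta>)) (at 1)"
      unfolding \<phi>_def by (intro DERIV_diff DERIV_cmult)
    moreover have "s / n * (M N * (p * N)) - 1/2 * ((2 * l + 2) * \<beta>) = M N * N - (l + 1) * \<beta>"
      unfolding p_def n_def using s_pos by (simp add: field_simps)
    ultimately show "(\<phi> has_real_derivative M N * N - (l + 1) * choquard_integral u) (at 1)"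
      unfolding \<beta>_def by simp
  qed
qed

lemma J_fun_minus_derivative_ge:
  assumes u: "u \<in> X0 s \<Omega>" and d: "has_X0_derivative s \<Omega> (J_fun s \<mu> M G \<Omega>) L u"
    and N_def: "N = enn2real (gagliardo (real DIM('a) / s) s u)" and N: "0 < N"
    and \<gamma>: "1 < \<gamma>"
    and M2: "\<And>t1 t2. 0 < t1 \<Longrightarrow> t1 \<le> t2 \<Longrightarrow> M t2 / t2 powr (\<gamma> - 1) \<le> M t1 / t1 powr (\<gamma> - 1)"
    and l: "0 < l + 1"
  shows "(s / (real DIM('a) * \<gamma>) - 1 / (2 * (l + 1))) * (M N * N)
    \<le> J_fun s \<mu> M G \<Omega> u - L u / (2 * (l + 1))"
proof -
  define \<theta> where "\<theta> = 1 / (2 * (l + 1))"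
  define \<beta> where "\<beta> = choquard_integral u"
  have \<theta>: "0 < \<theta>" "\<theta> * (l + 1) = 1/2"
    unfolding \<theta>_def using l by auto
  have "L u \<le> M N * N - (l + 1) * \<beta>"
    unfolding \<beta>_def by (rule has_X0_derivative_self_le[OF u d N_def N])
  then have "\<theta> * L u \<le> \<theta> * (M N * N - (l + 1) * \<beta>)"
    using \<theta>(1) by (intro mult_left_mono) auto
  also have "\<dots> = \<theta> * (M N * N) - (\<theta> * (l + 1)) * \<beta>"
    by (simp add: algebra_simps)
  finally have "\<theta> * L u \<le> \<theta> * (M N * N) - (\<theta> * (l + 1)) * \<beta>" .
  moreover have "M N * N / \<gamma> \<le> Mhat M N"
    by (rule M_mult_le_Mhat[OF M_continuous M_nonneg \<gamma> M2 N])
  then have "s / (real DIM('a) * \<gamma>) * (M N * N) \<le> s / real DIM('a) * Mhat M N"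
    using s_pos mult_left_mono[of "M N * N / \<gamma>" "Mhat M N" "s / real DIM('a)"] by simp
  moreover have "J_fun s \<mu> M G \<Omega> u = s / real DIM('a) * Mhat M N - 1/2 * \<beta>"
    unfolding J_fun_eq N_def \<beta>_def ..
  ultimately have "s / (real DIM('a) * \<gamma>) * (M N * N) - \<theta> * (M N * N)
      \<le> J_fun s \<mu> M G \<Omega> u - \<theta> * L u"
    unfolding \<theta>(2) by linarith
  then show ?thesis
    unfolding \<theta>_def by (simp add: left_diff_distrib)
qed

lemma X0_norm_le_of_bounds:
  assumes u: "u \<in> X0 s \<Omega>" and d: "has_X0_derivative s \<Omega> (J_fun s \<mu> M G \<Omega>) L u"
    and \<gamma>: "1 < \<gamma>"
    and M2: "\<And>t1 t2. 0 < t1 \<Longrightarrow> t1 \<le> t2 \<Longrightarrow> M t2 / t2 powr (\<gamma> - 1) \<le> M t1 / t1 powr (\<gamma> - 1)"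
    and \<kappa>: "0 < \<kappa>" "\<And>t. 1 \<le> t \<Longrightarrow> \<kappa> \<le> M t"
    and \<theta>_def: "\<theta> = 1 / (2 * (l + 1))" and l: "0 < l + 1" and a0: "0 < s / (real DIM('a) * \<gamma>) - \<theta>"
    and p: "2 \<le> real DIM('a) / s"
    and J_bound: "\<bar>J_fun s \<mu> M G \<Omega> u\<bar> \<le> K1" and L_bound: "X0_dual_norm s \<Omega> L \<le> K2"
    and \<nu>: "1 < X0_norm s u"
  shows "X0_norm s u \<le> (K1 + \<theta> * K2) / ((s / (real DIM('a) * \<gamma>) - \<theta>) * \<kappa>)"
proof -
  define a0 where "a0 = s / (real DIM('a) * \<gamma>) - \<theta>"
  define \<nu> where "\<nu> = X0_norm s u"
  define N where "N = enn2real (gagliardo (real DIM('a) / s) s u)"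
  have "\<nu>\<^sup>2 = \<nu> powr 2"
    using \<nu> unfolding \<nu>_def by (simp add: powr_numeral)
  also have "\<dots> \<le> \<nu> powr (real DIM('a) / s)"
    using \<nu> p unfolding \<nu>_def by (intro powr_mono) auto
  also have "\<dots> = N"
    unfolding \<nu>_def N_def by (rule X0_norm_powr[OF s_pos])
  finally have N: "\<nu>\<^sup>2 \<le> N" .
  then have N1: "1 \<le> N"
    using one_less_power[OF \<nu>, of 2] unfolding \<nu>_def by linarith
  have "\<kappa> * \<nu>\<^sup>2 \<le> M N * N"
    using \<kappa>(1) \<kappa>(2)[OF N1] N by (intro mult_mono) auto
  then have "a0 * \<kappa> * \<nu>\<^sup>2 \<le> a0 * (M N * N)"
    using mult_left_mono[of _ _ a0] a0 unfolding a0_def by (simp add: mult.assoc)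
  also have "\<dots> \<le> J_fun s \<mu> M G \<Omega> u - \<theta> * L u"
    using J_fun_minus_derivative_ge[OF u d N_def _ \<gamma> M2 l] N1 unfolding a0_def \<theta>_def by simp
  also have "\<dots> \<le> K1 + \<theta> * (K2 * \<nu>)"
  proof -
    have "\<bar>L u\<bar> \<le> X0_dual_norm s \<Omega> L * \<nu>"
      unfolding \<nu>_def by (rule abs_le_X0_dual_norm_mult[OF d u s_pos])
    also have "\<dots> \<le> K2 * \<nu>"
      using L_bound \<nu> unfolding \<nu>_def by (intro mult_right_mono) auto
    finally have "- L u \<le> K2 * \<nu>"
      by linarith
    then have "\<theta> * (- L u) \<le> \<theta> * (K2 * \<nu>)"
      using l unfolding \<theta>_def by (intro mult_left_mono) auto
    then show ?thesis
      using abs_le_D1[OF J_bound] by simp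
  qed
  finally show ?thesis
    using a0 \<kappa> \<nu> abs_ge_zero[of "J_fun s \<mu> M G \<Omega> u"] J_bound unfolding a0_def \<nu>_def
    by (intro le_of_square_le_affine) (auto simp: mult_ac)
qed

lemma palais_smale_sequence_bounded:
  fixes u :: "nat \<Rightarrow> 'a \<Rightarrow> real" and L :: "nat \<Rightarrow> ('a \<Rightarrow> real) \<Rightarrow> real"
  assumes \<gamma>: "1 < \<gamma>"
    and M2: "\<And>t1 t2. 0 < t1 \<Longrightarrow> t1 \<le> t2 \<Longrightarrow> M t2 / t2 powr (\<gamma> - 1) \<le> M t1 / t1 powr (\<gamma> - 1)"
    and M3: "\<And>b. 0 < b \<Longrightarrow> \<exists>\<kappa>>0. \<forall>t\<ge>b. \<kappa> \<le> M t"
    and l: "\<gamma> * real DIM('a) / (2 * s) - 1 < l" and p: "2 \<le> real DIM('a) / s"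
    and u: "\<And>k. u k \<in> X0 s \<Omega>" and J_conv: "(\<lambda>k. J_fun s \<mu> M G \<Omega> (u k)) \<longlonglongrightarrow> c"
    and d: "\<And>k. has_X0_derivative s \<Omega> (J_fun s \<mu> M G \<Omega>) (L k) (u k)"
    and L_conv: "(\<lambda>k. X0_dual_norm s \<Omega> (L k)) \<longlonglongrightarrow> 0"
  shows "\<exists>C. \<forall>k. X0_norm s (u k) \<le> C"
proof -
  define n where "n = real DIM('a)"
  define \<theta> where "\<theta> = 1 / (2 * (l + 1))"
  obtain K1 where K1: "\<And>k. \<bar>J_fun s \<mu> M G \<Omega> (u k)\<bar> \<le> K1"
    using convergent_imp_Bseq[OF convergentI[OF J_conv]] by (metis BseqE real_norm_def)
  obtain K2 where K2: "\<And>k. \<bar>X0_dual_norm s \<Omega> (L k)\<bar> \<le> K2"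
    using convergent_imp_Bseq[OF convergentI[OF L_conv]] by (metis BseqE real_norm_def)
  obtain \<kappa> where \<kappa>: "0 < \<kappa>" "\<And>t. 1 \<le> t \<Longrightarrow> \<kappa> \<le> M t"
    using M3[of 1] by auto
  have "0 < \<gamma> * n / (2 * s)"
    using \<gamma> s_pos unfolding n_def by simp
  moreover have lt: "\<gamma> * n / (2 * s) < l + 1"
    using l unfolding n_def by linarith
  ultimately have l1: "0 < l + 1"
    by linarith
  have "\<gamma> * n < (l + 1) * (2 * s)"
    using lt s_pos by (simp add: pos_divide_less_eq)
  then have "\<theta> < s / (n * \<gamma>)"
    unfolding \<theta>_def using l1 \<gamma> s_pos unfolding n_def
    by (simp add: divide_less_eq less_divide_eq mult.commute mult.left_commute)
  then have a0: "0 < s / (real DIM('a) * \<gamma>) - \<theta>"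
    unfolding n_def by simp
  have "X0_norm s (u k) \<le> max 1 ((K1 + \<theta> * K2) / ((s / (real DIM('a) * \<gamma>) - \<theta>) * \<kappa>))" for k
    using X0_norm_le_of_bounds[OF u d \<gamma> M2 \<kappa> \<theta>_def l1 a0 p K1 abs_le_D1[OF K2]]
    by (cases "X0_norm s (u k) \<le> 1") (auto simp: not_le le_max_iff_disj)
  then show ?thesis
    by blast
qed

end

theorem lemma3p2:
  fixes \<Omega> :: "'a::euclidean_space set" and s \<mu> \<gamma> c :: real
    and M :: "real \<Rightarrow> real" and h g G :: "'a \<Rightarrow> real \<Rightarrow> real"
    and u :: "nat \<Rightarrow> 'a \<Rightarrow> real" and L :: "nat \<Rightarrow> ('a \<Rightarrow> real) \<Rightarrow> real"
  assumes s: "0 < s" "s < 1" "real DIM('a) / s \<ge> 2"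
    and \<Omega>: "bounded \<Omega>" "lipschitz_domain \<Omega>"
    and \<mu>: "0 < \<mu>" "\<mu> < real DIM('a)"
    and M_cont: "continuous_on {0..} M"
    and M_nonneg: "\<forall>t\<ge>0. M t \<ge> 0"
    and M1: "\<forall>t\<ge>0. \<forall>r\<ge>0. Mhat M (t + r) \<ge> Mhat M t + Mhat M r"
    and M2: "\<gamma> > 1" "\<forall>t1 t2. 0 < t1 \<longrightarrow> t1 \<le> t2 \<longrightarrow> M t2 / t2 powr (\<gamma> - 1) \<le> M t1 / t1 powr (\<gamma> - 1)"
    and M3: "\<forall>b>0. \<exists>\<kappa>>0. \<forall>t\<ge>b. M t \<ge> \<kappa>"
    and g_def: "\<forall>x t. g x t = h x t * exp (\<bar>t\<bar> powr (real DIM('a) / (real DIM('a) - s)))"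
    and G_def: "\<forall>x t. G x t = integral {0..t} (g x)"
    and g1: "\<exists>D. (\<forall>z\<in>closure \<Omega> \<times> UNIV.
                  ((\<lambda>z. h (fst z) (snd z)) has_derivative D z) (at z within closure \<Omega> \<times> UNIV)) \<and>
                (\<forall>v. continuous_on (closure \<Omega> \<times> UNIV) (\<lambda>z. D z v))"
      "\<forall>x\<in>closure \<Omega>. \<forall>t\<le>0. h x t = 0"
      "\<forall>x\<in>closure \<Omega>. \<forall>t>0. h x t > 0"
    and g2: "\<forall>\<epsilon>>0. ((\<lambda>t. SUP x\<in>\<Omega>. h x t * exp (- \<epsilon> * \<bar>t\<bar> powr (real DIM('a) / (real DIM('a) - s))))
                 \<longlongrightarrow> 0) at_top"
      "\<forall>\<epsilon>>0. filterlim (\<lambda>t. INF x\<in>\<Omega>. h x t * exp (\<epsilon> * \<bar>t\<bar> powr (real DIM('a) / (real DIM('a) - s))))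
                 at_top at_top"
    and g3: "\<exists>t0>0. \<exists>T0>0. \<exists>\<gamma>0>0. \<forall>x\<in>\<Omega>. \<forall>t\<ge>t0.
               0 < t powr \<gamma>0 * G x t \<and> t powr \<gamma>0 * G x t \<le> T0 * g x t"
    and g4: "\<exists>l. l > \<gamma> * real DIM('a) / (2 * s) - 1 \<and>
               (\<forall>x\<in>\<Omega>. strict_mono_on {0<..} (\<lambda>t. g x t / t powr l))"
    and PS: "\<forall>k. u k \<in> X0 s \<Omega>"
      "(\<lambda>k. J_fun s \<mu> M G \<Omega> (u k)) \<longlonglongrightarrow> c"
      "\<forall>k. has_X0_derivative s \<Omega> (J_fun s \<mu> M G \<Omega>) (L k) (u k)"
      "(\<lambda>k. X0_dual_norm s \<Omega> (L k)) \<longlonglongrightarrow> 0"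
  shows "\<exists>C. \<forall>k. X0_norm s (u k) \<le> C"
proof -
  obtain l where l: "\<gamma> * real DIM('a) / (2 * s) - 1 < l"
    and quotient_mono: "\<And>x. x \<in> \<Omega> \<Longrightarrow> strict_mono_on {0<..} (\<lambda>t. g x t / t powr l)"
    using g4 by auto
  obtain D where "\<forall>z\<in>closure \<Omega> \<times> UNIV.
      ((\<lambda>z. h (fst z) (snd z)) has_derivative D z) (at z within closure \<Omega> \<times> UNIV)"
    using g1(1) by blast
  then have h_continuous: "continuous_on (closure \<Omega> \<times> UNIV) (\<lambda>z. h (fst z) (snd z))"
    unfolding continuous_on_eq_continuous_within using has_derivative_continuous by blast
  have "0 < real DIM('a) - s"
    using s(2) DIM_positive[where 'a='a] by linarith
  interpret kirchhoff_choquard \<Omega> \<mu> l g G s M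
  proof unfold_locales
    show "continuous_on (closure \<Omega> \<times> UNIV) (\<lambda>z. g (fst z) (snd z))"
      unfolding g_def[rule_format] using h_continuous \<open>0 < real DIM('a) - s\<close>
      by (intro continuous_intros continuous_on_powr') auto
    show "0 \<le> g x t" if "x \<in> closure \<Omega>" for x t
      using g1(2,3) that unfolding g_def[rule_format]
      by (cases "t \<le> 0") (auto simp: not_le intro!: less_imp_le)
    show "g x (a * \<sigma>) \<le> a powr l * g x \<sigma>" if "x \<in> \<Omega>" "0 < \<sigma>" "0 < a" "a \<le> 1" for x \<sigma> a
      using le_of_mono_on_quotient_powr[OF strict_mono_on_imp_mono_on[OF quotient_mono]] that by blast
  qed (use s \<Omega> \<mu> M_cont M_nonneg g1(2) G_def in \<open>auto simp: g_def lipschitz_domain_def\<close>)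
  show ?thesis
    using palais_smale_sequence_bounded[OF M2(1) M2(2)[rule_format] M3[rule_format] l s(3)
        PS(1)[rule_format] PS(2) PS(3)[rule_format] PS(4)] by blast
qed

end
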